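(* Let $\mathfrak{M}$ be a non-quasianalytic weight matrix of R-moderate growth and $\mathfrak{M}'$ a one-parameter family of positive sequences such that $\liminf_{k\to\infty}(M'_k/k!)^{1/k}>0$ for all $M'\in\mathfrak{M}'$. Assume that there exists $\widehat M'\in\mathfrak{M}'$ such that for every $M'\in\mathfrak{M}'$ there is $n\in\mathbb{N}_{\ge1}$ with $M'\preceq(\widehat M')^{[n]}$. If there is $\widehat M\in\mathfrak{M}$ with $\widehat M'\prec_{SV}\widehat M$, then $\Lambda^{\{\mathfrak{M}'\}}\subseteq j^\infty\mathcal{E}^{\{\mathfrak{M}\}}(\mathbb{R})$.
   Context: A weight sequence is $M=(M_k)_{k\ge0}$ with $M_k=\mu_0\cdots\mu_k$, $1=\mu_0\le\mu_1\le\cdots$, $\mu_k\to\infty$; non-quasianalytic if $\sum1/\mu_k<\infty$. A weight matrix $\mathfrak{M}=\{M^{(\alpha)}:\alpha>0\}$: weight sequences with $M^{(\alpha)}\le M^{(\beta)}$ for $\alpha\le\beta$; non-quasianalytic if all members are; R-moderate growth: for each $M\in\mathfrak{M}$ there are $N\in\mathfrak{M}$, $C\ge1$ with $M_{j+k}\le C^{j+k}N_jN_k$. $M\preceq N$ iff $\sup_{k\ge1}(M_k/N_k)^{1/k}<\infty$. $N^{[n]}_j:=N_{nj}^{1/n}$. $M'\prec_{SV}M$ means $\exists s\in\mathbb{N}_{\ge1}$: $\sup_{j\ge1}\frac1j\sup_{0\le i<j}(M'_j/(s^jM_i))^{1/(j-i)}\sum_{k\ge j}1/\mu_k<\infty$.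 Spaces: $\Lambda^{\{M\}}=\{a\in\mathbb{C}^{\mathbb{N}}:\exists\sigma>0,\sup_k|a_k|/(\sigma^kM_k)<\infty\}$, $\Lambda^{\{\mathfrak{M}'\}}=\bigcup_{M'\in\mathfrak{M}'}\Lambda^{\{M'\}}$; $\mathcal{E}^{\{\mathfrak{M}\}}(\mathbb{R})$: all $f\in C^\infty(\mathbb{R})$ such that for each $n$ there are $\sigma>0$, $M\in\mathfrak{M}$ with $\sup_{x\in[-n,n],k}|f^{(k)}(x)|/(\sigma^kM_k)<\infty$; $j^\infty f=(f^{(k)}(0))_k$. *)

theory Defs
  imports "HOL-Analysis.Analysis"
begin

definition mu :: "(nat \<Rightarrow> real) \<Rightarrow> nat \<Rightarrow> real" where
  "mu M k = (if k = 0 then 1 else M k / M (k - 1))"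

definition weight_seq :: "(nat \<Rightarrow> real) \<Rightarrow> bool" where
  "weight_seq M \<longleftrightarrow> M 0 = 1 \<and> (\<forall>k. M k > 0) \<and> (\<forall>k. mu M k \<le> mu M (Suc k))
     \<and> filterlim (mu M) at_top sequentially"

definition nonquasianalytic :: "(nat \<Rightarrow> real) \<Rightarrow> bool" where
  "nonquasianalytic M \<longleftrightarrow> summable (\<lambda>k. 1 / mu M k)"

definition weight_matrix :: "(real \<Rightarrow> nat \<Rightarrow> real) \<Rightarrow> bool" where
  "weight_matrix Mat \<longleftrightarrow> (\<forall>\<alpha>>0. weight_seq (Mat \<alpha>))
     \<and> (\<forall>\<alpha> \<beta>. 0 < \<alpha> \<longrightarrow> \<alpha> \<le> \<beta> \<longrightarrow> (\<forall>k. Mat \<alpha> k \<le> Mat \<beta> k))"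

definition nonquasianalytic_matrix :: "(real \<Rightarrow> nat \<Rightarrow> real) \<Rightarrow> bool" where
  "nonquasianalytic_matrix Mat \<longleftrightarrow> (\<forall>\<alpha>>0. nonquasianalytic (Mat \<alpha>))"

definition R_moderate_growth :: "(real \<Rightarrow> nat \<Rightarrow> real) \<Rightarrow> bool" where
  "R_moderate_growth Mat \<longleftrightarrow> (\<forall>\<alpha>>0. \<exists>\<beta>>0. \<exists>C\<ge>1. \<forall>j k.
      Mat \<alpha> (j + k) \<le> C ^ (j + k) * Mat \<beta> j * Mat \<beta> k)"

definition seq_preceq :: "(nat \<Rightarrow> real) \<Rightarrow> (nat \<Rightarrow> real) \<Rightarrow> bool" where
  "seq_preceq M N \<longleftrightarrow> (\<exists>C. \<forall>k\<ge>1. (M k / N k) powr (1 / real k) \<le> C)"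

definition seq_pow_index :: "(nat \<Rightarrow> real) \<Rightarrow> nat \<Rightarrow> nat \<Rightarrow> real" where
  "seq_pow_index N n j = N (n * j) powr (1 / real n)"

definition SV_rel :: "(nat \<Rightarrow> real) \<Rightarrow> (nat \<Rightarrow> real) \<Rightarrow> bool" where
  "SV_rel M' M \<longleftrightarrow> (\<exists>s::nat. s \<ge> 1 \<and> (\<exists>C. \<forall>j\<ge>1.
      (1 / real j) * (MAX i\<in>{0..<j}. (M' j / (real s ^ j * M i)) powr (1 / real (j - i)))
        * (\<Sum>k. 1 / mu M (k + j)) \<le> C))"

definition Lambda_seq :: "(nat \<Rightarrow> real) \<Rightarrow> (nat \<Rightarrow> complex) set" where
  "Lambda_seq M = {a. \<exists>\<sigma>>0. \<exists>C. \<forall>k. cmod (a k) \<le> C * \<sigma> ^ k * M k}"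

definition Lambda_family :: "(real \<Rightarrow> nat \<Rightarrow> real) \<Rightarrow> (nat \<Rightarrow> complex) set" where
  "Lambda_family Mat' = (\<Union>\<alpha>\<in>{0<..}. Lambda_seq (Mat' \<alpha>))"

definition derivs_of :: "(real \<Rightarrow> complex) \<Rightarrow> (nat \<Rightarrow> real \<Rightarrow> complex) \<Rightarrow> bool" where
  "derivs_of f F \<longleftrightarrow> F 0 = f \<and> (\<forall>k x. (F k has_vector_derivative F (Suc k) x) (at x))"

definition E_roumieu :: "(real \<Rightarrow> nat \<Rightarrow> real) \<Rightarrow> (real \<Rightarrow> complex) set" where
  "E_roumieu Mat = {f. \<exists>F. derivs_of f F \<and> (\<forall>n::nat. \<exists>\<sigma>>0. \<exists>\<alpha>>0. \<exists>C. \<forall>x\<in>{- real n..real n}. \<forall>k.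
      cmod (F k x) \<le> C * \<sigma> ^ k * Mat \<alpha> k)}"

definition jet_image :: "(real \<Rightarrow> complex) set \<Rightarrow> (nat \<Rightarrow> complex) set" where
  "jet_image E = {a. \<exists>f\<in>E. \<exists>F. derivs_of f F \<and> (\<forall>k. F k 0 = a k)}"

end

theory Submission
  imports Defs
begin

text \<open>
  Let \<open>|a_j| \<le> K sigma^j N_(nj)^(1/n)\<close>, where \<open>N\<close> is the distinguished member of the
  one-parameter family. The extension is \<open>f(x) = sum_j (a_j / tau^j) g_j(tau x)\<close> with
  \<open>g_j(y) = y^j/j! chi_j(y)\<close>. The cutoff \<open>chi_j\<close> is the difference of two translates of an
  infinite convolution of normalised indicator functions of the lengths
  \<open>l_i = min(lambda_j, 1/mu_(n(i+1)))\<close>, where \<open>lambda_j = T(nj)/(nj)\<close> and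
  \<open>T(k) = sum_(i>=k) 1/mu_i\<close> is finite by non-quasianalyticity. Hence \<open>chi_j\<close> is 1 to infinite
  order at 0, vanishes for \<open>|y| > 3 j lambda_j\<close>, and \<open>|chi_j^(m)| \<le> 2^(m+1)/(l_0 ... l_(m-1))\<close>.
  On the support \<open>|y|^q/q! \<le> (3e)^j lambda_j^q\<close>; the relation \<open>N <_SV M\<close> bounds
  \<open>N_j T(j)^(j-i)\<close> by \<open>s^j M_i (C j)^(j-i)\<close>, and AM-GM turns products of the \<open>1/mu_i\<close> into
  quotients of values of \<open>M\<close>. Altogether the \<open>k\<close>-th derivative of \<open>g_j\<close> is
  \<open>O(4^k W^j M_(n(k+1))^(1/n) / N_(nj)^(1/n))\<close> with \<open>W\<close> independent of \<open>j, k\<close>, so for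
  \<open>tau = 2 sigma W\<close> the series converges with all derivatives, and R-moderate growth bounds
  \<open>M_(n(k+1))^(1/n)\<close> by \<open>A B^k\<close> times a member of the matrix.
\<close>

section \<open>Smooth step functions by iterated averaging\<close>

definition shift_seq :: "(nat \<Rightarrow> real) \<Rightarrow> nat \<Rightarrow> real" where
  "shift_seq l i = l (Suc i)"

definition pos_summable :: "(nat \<Rightarrow> real) \<Rightarrow> bool" where
  "pos_summable l \<longleftrightarrow> (\<forall>i. l i > 0) \<and> summable l"

lemma pos_summable_pos: "pos_summable l \<Longrightarrow> l i > 0"
  by (simp add: pos_summable_def)

lemma pos_summable_shift_seq: "pos_summable l \<Longrightarrow> pos_summable (shift_seq l)"
  unfolding pos_summable_def shift_seq_def using summable_Suc_iff[of l] by auto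

lemma suminf_shift_seq: "pos_summable l \<Longrightarrow> suminf l = l 0 + suminf (shift_seq l)"
  using suminf_split_head[of l] unfolding pos_summable_def shift_seq_def by simp

lemma pos_summable_suminf_pos: "pos_summable l \<Longrightarrow> suminf l > 0"
  by (rule suminf_pos) (auto simp: pos_summable_def)

text \<open>\<open>step_approx n l\<close> is the distribution function of \<open>X\<^sub>0 + \<dots> + X\<^sub>n\<^sub>-\<^sub>1\<close> for independent
  \<open>X\<^sub>i\<close> uniformly distributed on \<open>[-l i/2, l i/2]\<close>.\<close>
fun step_approx :: "nat \<Rightarrow> (nat \<Rightarrow> real) \<Rightarrow> real \<Rightarrow> real" where
  "step_approx 0 l y = (if 0 \<le> y then 1 else 0)"
| "step_approx (Suc n) l y = integral {y - l 0 / 2 .. y + l 0 / 2} (step_approx n (shift_seq l)) / l 0"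

lemma integral_shift_Icc:
  fixes g :: "real \<Rightarrow> real"
  shows "integral {a..b} (\<lambda>z. g (z + d)) = integral {a+d..b+d} g"
  using integral_shift_real_ivl[of "a+d" d "b+d" g] by simp

lemma mono_integrable_on:
  fixes g :: "real \<Rightarrow> real"
  assumes "mono g"
  shows "g integrable_on {a..b}"
  by (rule integrable_on_mono_on) (use assms in \<open>auto simp: mono_on_def mono_def\<close>)

lemma integral_window_mono:
  fixes g :: "real \<Rightarrow> real"
  assumes "mono g" "y1 \<le> y2"
  shows "integral {y1 - c .. y1 + c} g \<le> integral {y2 - c .. y2 + c} g"
proof -
  have "integral {y1 - c .. y1 + c} g \<le> integral {y1 - c .. y1 + c} (\<lambda>z. g (z + (y2 - y1)))"
  proof (rule integral_le)
    have "mono (\<lambda>z. g (z + (y2 - y1)))" using assms(1) by (auto simp: mono_def)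
    then show "(\<lambda>z. g (z + (y2 - y1))) integrable_on {y1 - c..y1 + c}" by (rule mono_integrable_on)
  qed (use assms in \<open>auto simp: mono_integrable_on mono_def\<close>)
  also have "\<dots> = integral {y2 - c .. y2 + c} g"
    by (subst integral_shift_Icc) (simp add: algebra_simps)
  finally show ?thesis .
qed

lemma integral_unit_bounded:
  fixes g :: "real \<Rightarrow> real"
  assumes "mono g" "\<And>z. 0 \<le> g z" "\<And>z. g z \<le> 1" "a \<le> b"
  shows "0 \<le> integral {a..b} g" "integral {a..b} g \<le> b - a"
proof -
  show "0 \<le> integral {a..b} g"
    by (rule integral_nonneg[OF mono_integrable_on[OF assms(1)]]) (use assms in auto)
  have "integral {a..b} g \<le> integral {a..b} (\<lambda>_. 1::real)"
    by (rule integral_le[OF mono_integrable_on[OF assms(1)]]) (use assms in auto)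
  then show "integral {a..b} g \<le> b - a" using assms(4) by simp
qed

lemma integral_window_diff_le:
  fixes g :: "real \<Rightarrow> real"
  assumes "mono g" "\<And>z. 0 \<le> g z" "\<And>z. g z \<le> 1" "y1 \<le> y2" "c \<ge> 0"
  shows "integral {y2 - c .. y2 + c} g - integral {y1 - c .. y1 + c} g \<le> y2 - y1"
proof -
  define P where "P t = integral {y1 - c..t} g" for t
  have split: "integral {t1..t2} g = P t2 - P t1" if "y1 - c \<le> t1" "t1 \<le> t2" for t1 t2
    using Henstock_Kurzweil_Integration.integral_combine[OF that mono_integrable_on[OF assms(1)]]
    unfolding P_def by simp
  have "integral {y1 + c .. y2 + c} g \<le> y2 - y1"
    using integral_unit_bounded(2)[OF assms(1-3), of "y1 + c" "y2 + c"] assms(4) by simp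
  moreover have "0 \<le> integral {y1 - c .. y2 - c} g"
    using integral_unit_bounded(1)[OF assms(1-3), of "y1 - c" "y2 - c"] assms(4) by simp
  ultimately show ?thesis
    using split[of "y1 - c" "y1 + c"] split[of "y2 - c" "y2 + c"]
      split[of "y1 + c" "y2 + c"] split[of "y1 - c" "y2 - c"] assms(4,5) by simp
qed

lemma step_approx_mono_bounded:
  assumes "\<And>i. l i > 0"
  shows "mono (step_approx n l) \<and> (\<forall>y. 0 \<le> step_approx n l y \<and> step_approx n l y \<le> 1)"
  using assms
proof (induction n arbitrary: l)
  case 0
  then show ?case by (auto simp: mono_def)
next
  case (Suc n)
  have "\<And>i. shift_seq l i > 0" using Suc.prems by (simp add: shift_seq_def)
  note IH = Suc.IH[where l="shift_seq l", OF this]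
  have l0: "l 0 > 0" using Suc.prems by simp
  have "mono (step_approx (Suc n) l)"
  proof (rule monoI)
    fix x y :: real
    assume "x \<le> y"
    then show "step_approx (Suc n) l x \<le> step_approx (Suc n) l y"
      using integral_window_mono[of "step_approx n (shift_seq l)" x y "l 0/2"] IH l0
      by (simp add: divide_right_mono)
  qed
  moreover have "0 \<le> step_approx (Suc n) l y \<and> step_approx (Suc n) l y \<le> 1" for y
    using integral_unit_bounded[of "step_approx n (shift_seq l)" "y - l 0/2" "y + l 0/2"] IH l0
    by (auto simp: divide_le_eq)
  ultimately show ?case by blast
qed

lemma step_approx_outside:
  assumes "\<And>i. l i > 0"
  shows "(y < -(\<Sum>i<n. l i)/2 \<longrightarrow> step_approx n l y = 0)
    \<and> (y \<ge> (\<Sum>i<n. l i)/2 \<longrightarrow> step_approx n l y = 1)"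
  using assms
proof (induction n arbitrary: l y)
  case 0
  then show ?case by auto
next
  case (Suc n)
  have "\<And>i. shift_seq l i > 0" using Suc.prems by (simp add: shift_seq_def)
  note IH = Suc.IH[where l="shift_seq l", OF this]
  have l0: "l 0 > 0" using Suc.prems by simp
  define S where "S = (\<Sum>i<n. shift_seq l i)"
  have sum: "(\<Sum>i<Suc n. l i) = l 0 + S"
    unfolding S_def sum.lessThan_Suc_shift shift_seq_def by simp
  have "step_approx (Suc n) l y = 0" if "y < -(l 0 + S)/2"
  proof -
    have "integral {y - l 0/2 .. y + l 0/2} (step_approx n (shift_seq l))
        = integral {y - l 0/2 .. y + l 0/2} (\<lambda>_. 0::real)"
      by (rule integral_cong) (use that IH in \<open>force simp: S_def\<close>)
    then show ?thesis by simp
  qed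
  moreover have "step_approx (Suc n) l y = 1" if "y \<ge> (l 0 + S)/2"
  proof -
    have "integral {y - l 0/2 .. y + l 0/2} (step_approx n (shift_seq l))
        = integral {y - l 0/2 .. y + l 0/2} (\<lambda>_. 1::real)"
      by (rule integral_cong) (use that IH in \<open>force simp: S_def\<close>)
    then show ?thesis using l0 by simp
  qed
  ultimately show ?case using sum by simp
qed

lemma step_approx_sandwich:
  assumes "\<And>i. l i > 0"
  shows "step_approx n l (y - (\<Sum>i\<in>{n..<n+m}. l i)/2) \<le> step_approx (n+m) l y
    \<and> step_approx (n+m) l y \<le> step_approx n l (y + (\<Sum>i\<in>{n..<n+m}. l i)/2)"
  using assms
proof (induction n arbitrary: l y)
  case 0
  then show ?case
    using step_approx_outside[of l y m, OF 0(1)] step_approx_mono_bounded[of l m, OF 0(1)]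
    by (auto simp: atLeast0LessThan)
next
  case (Suc n)
  let ?g = "step_approx n (shift_seq l)" and ?h = "step_approx (n + m) (shift_seq l)"
  and ?c = "l 0 / 2"
  define E where "E = (\<Sum>i\<in>{n..<n+m}. shift_seq l i) / 2"
  have "\<And>i. shift_seq l i > 0" using Suc.prems by (simp add: shift_seq_def)
  note IH = Suc.IH[where l="shift_seq l", OF this, folded E_def]
  have mono: "\<And>k. mono (step_approx k (shift_seq l))"
    using step_approx_mono_bounded[of "shift_seq l"] \<open>\<And>i. shift_seq l i > 0\<close> by blast
  have l0: "l 0 > 0" using Suc.prems by simp
  have E: "(\<Sum>i\<in>{Suc n..<Suc n+m}. l i) / 2 = E"
    unfolding E_def shift_seq_def using sum.shift_bounds_Suc_ivl[of l n "n+m"]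
    by (simp del: sum.op_ivl_Suc)
  have shifted_integrable: "(\<lambda>z. ?g (z + d)) integrable_on {a..b}" "(\<lambda>z. ?g (z - d)) integrable_on {a..b}"
    for a b d by (rule mono_integrable_on, use mono[of n] in \<open>auto simp: mono_def\<close>)+
  have "integral {y - ?c .. y + ?c} ?h \<le> integral {y - ?c .. y + ?c} (\<lambda>z. ?g (z + E))"
    by (rule integral_le) (use IH in \<open>auto simp: mono_integrable_on[OF mono] shifted_integrable\<close>)
  also have "\<dots> = integral {(y + E) - ?c .. (y + E) + ?c} ?g"
    by (subst integral_shift_Icc) (simp add: algebra_simps)
  finally have up: "integral {y - ?c .. y + ?c} ?h \<le> integral {(y + E) - ?c .. (y + E) + ?c} ?g" .
  have "integral {(y - E) - ?c .. (y - E) + ?c} ?g = integral {y - ?c .. y + ?c} (\<lambda>z. ?g (z + - E))"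
    by (subst integral_shift_Icc) (simp add: algebra_simps)
  also have "\<dots> \<le> integral {y - ?c .. y + ?c} ?h"
    by (rule integral_le) (use IH in \<open>auto simp: mono_integrable_on[OF mono] shifted_integrable\<close>)
  finally have lo: "integral {(y - E) - ?c .. (y - E) + ?c} ?g \<le> integral {y - ?c .. y + ?c} ?h" .
  show ?case unfolding E using up lo l0 by (simp add: divide_right_mono)
qed

lemma step_approx_Suc_lipschitz:
  assumes "\<And>i. l i > 0" "y1 \<le> y2"
  shows "step_approx (Suc n) l y2 - step_approx (Suc n) l y1 \<le> (y2 - y1) / l 0"
proof -
  have "\<And>i. shift_seq l i > 0" using assms by (simp add: shift_seq_def)
  then have "mono (step_approx n (shift_seq l))"
    "\<And>z. 0 \<le> step_approx n (shift_seq l) z" "\<And>z. step_approx n (shift_seq l) z \<le> 1"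
    using step_approx_mono_bounded by blast+
  from integral_window_diff_le[OF this assms(2), of "l 0 / 2"] assms(1)[of 0]
  show ?thesis by (simp add: diff_divide_distrib[symmetric] divide_right_mono)
qed

lemma abs_step_approx_diff_le:
  assumes "pos_summable l"
  shows "\<bar>step_approx (Suc n + m) l y - step_approx (Suc n) l y\<bar> \<le> (\<Sum>i. l (i + Suc n)) / l 0"
proof -
  have pos: "\<And>i. l i > 0" using assms by (simp add: pos_summable_def)
  define E where "E = (\<Sum>i\<in>{Suc n..<Suc n+m}. l i)/2"
  have E0: "0 \<le> E" unfolding E_def using pos by (simp add: sum_nonneg less_imp_le)
  have "(\<Sum>i\<in>{Suc n..<Suc n+m}. l i) = (\<Sum>i<m. l (i + Suc n))"
    using sum.shift_bounds_nat_ivl[of l 0 "Suc n" m] by (simp add: atLeast0LessThan add.commute)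
  also have "\<dots> \<le> (\<Sum>i. l (i + Suc n))"
    using assms summable_iff_shift[of l "Suc n"]
    by (intro sum_le_suminf) (auto simp: pos_summable_def less_imp_le)
  finally have ET: "2 * E \<le> (\<Sum>i. l (i + Suc n))" unfolding E_def by simp
  have "step_approx (Suc n) l (y - E) \<le> step_approx (Suc n + m) l y"
    "step_approx (Suc n + m) l y \<le> step_approx (Suc n) l (y + E)"
    using step_approx_sandwich[of l "Suc n" y m, OF pos] by (simp_all add: E_def)
  moreover have "step_approx (Suc n) l (y + E) - step_approx (Suc n) l y \<le> E / l 0"
    "step_approx (Suc n) l y - step_approx (Suc n) l (y - E) \<le> E / l 0"
    using step_approx_Suc_lipschitz[of l y "y + E" n, OF pos] step_approx_Suc_lipschitz[of l "y - E" y n, OF pos] E0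
    by simp_all
  moreover have "E / l 0 \<le> (\<Sum>i. l (i + Suc n)) / l 0"
    using ET E0 pos[of 0] by (intro divide_right_mono) auto
  ultimately show ?thesis by linarith
qed

lemma convergent_step_approx:
  assumes "pos_summable l"
  shows "convergent (\<lambda>n. step_approx n l y)"
  unfolding Cauchy_convergent_iff[symmetric]
proof (rule CauchyI')
  fix e :: real
  assume "0 < e"
  have l0: "l 0 > 0" using assms by (rule pos_summable_pos)
  obtain N where N: "\<And>n. n \<ge> N \<Longrightarrow> norm (\<Sum>i. l (i + n)) < e * l 0"
    using suminf_exist_split[of "e * l 0" l] \<open>0 < e\<close> l0 assms
    by (auto simp: pos_summable_def)
  show "\<exists>M. \<forall>m\<ge>M. \<forall>n>m. dist (step_approx m l y) (step_approx n l y) < e"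
  proof (intro exI allI impI)
    fix m n
    assume "Suc N \<le> m" "m < n"
    then obtain m' where m: "m = Suc m'" by (cases m) auto
    have "dist (step_approx m l y) (step_approx n l y) \<le> (\<Sum>i. l (i + m)) / l 0"
      using abs_step_approx_diff_le[OF assms, of m' "n - m" y] m \<open>m < n\<close>
      by (simp add: dist_real_def abs_minus_commute)
    also have "\<dots> < e"
      using N[of m] \<open>Suc N \<le> m\<close> l0 by (simp add: divide_less_eq)
    finally show "dist (step_approx m l y) (step_approx n l y) < e" .
  qed
qed

definition smooth_step :: "(nat \<Rightarrow> real) \<Rightarrow> real \<Rightarrow> real" where
  "smooth_step l y = lim (\<lambda>n. step_approx n l y)"

lemma step_approx_tendsto: "pos_summable l \<Longrightarrow> (\<lambda>n. step_approx n l y) \<longlonglongrightarrow> smooth_step l y"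
  unfolding smooth_step_def using convergent_step_approx convergent_LIMSEQ_iff by blast

lemma smooth_step_mono_bounded:
  assumes "pos_summable l"
  shows "0 \<le> smooth_step l y" "smooth_step l y \<le> 1" "mono (smooth_step l)"
proof -
  have "\<And>i. l i > 0" using assms by (simp add: pos_summable_def)
  then have b: "\<And>n y. 0 \<le> step_approx n l y \<and> step_approx n l y \<le> 1" "\<And>n. mono (step_approx n l)"
    using step_approx_mono_bounded by blast+
  show "0 \<le> smooth_step l y"
    by (rule LIMSEQ_le_const[OF step_approx_tendsto[OF assms]]) (use b in auto)
  show "smooth_step l y \<le> 1"
    by (rule LIMSEQ_le_const2[OF step_approx_tendsto[OF assms]]) (use b in auto)
  show "mono (smooth_step l)"
  proof (rule monoI)
    fix x y :: real
    assume "x \<le> y"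
    then show "smooth_step l x \<le> smooth_step l y"
      by (intro LIMSEQ_le[OF step_approx_tendsto[OF assms] step_approx_tendsto[OF assms]])
        (use b in \<open>auto simp: mono_def\<close>)
  qed
qed

lemma smooth_step_lipschitz:
  assumes "pos_summable l"
  shows "(1 / l 0)-lipschitz_on UNIV (smooth_step l)"
proof (rule lipschitz_onI)
  have pos: "\<And>i. l i > 0" using assms by (simp add: pos_summable_def)
  have le: "smooth_step l y2 - smooth_step l y1 \<le> (y2 - y1) / l 0" if "y1 \<le> y2" for y1 y2
  proof (rule LIMSEQ_le_const2)
    show "(\<lambda>n. step_approx (Suc n) l y2 - step_approx (Suc n) l y1) \<longlonglongrightarrow> smooth_step l y2 - smooth_step l y1"
      by (intro tendsto_diff) (use step_approx_tendsto[OF assms] LIMSEQ_Suc in blast)+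
    show "\<exists>N. \<forall>n\<ge>N. step_approx (Suc n) l y2 - step_approx (Suc n) l y1 \<le> (y2 - y1) / l 0"
      using step_approx_Suc_lipschitz[of l y1 y2, OF pos that] by blast
  qed
  have mono: "mono (smooth_step l)" by (rule smooth_step_mono_bounded(3)[OF assms])
  fix x y :: real
  show "dist (smooth_step l x) (smooth_step l y) \<le> 1 / l 0 * dist x y"
    using le[of x y] le[of y x] monoD[OF mono, of x y] monoD[OF mono, of y x]
    by (cases "x \<le> y") (auto simp: dist_real_def)
  show "0 \<le> 1 / l 0" using pos[of 0] by simp
qed

lemma smooth_step_outside:
  assumes "pos_summable l"
  shows "y < - suminf l / 2 \<Longrightarrow> smooth_step l y = 0" "y \<ge> suminf l / 2 \<Longrightarrow> smooth_step l y = 1"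
proof -
  have pos: "\<And>i. l i > 0" using assms by (simp add: pos_summable_def)
  have partial: "\<And>n. (\<Sum>i<n. l i) \<le> suminf l"
    using assms by (intro sum_le_suminf) (auto simp: pos_summable_def less_imp_le)
  show "smooth_step l y = 0" if "y < - suminf l / 2"
  proof -
    have "step_approx n l y = 0" for n
      using step_approx_outside[of l y n, OF pos] partial[of n] that by force
    then show ?thesis using LIMSEQ_unique[OF step_approx_tendsto[OF assms, of y]] by simp
  qed
  show "smooth_step l y = 1" if "y \<ge> suminf l / 2"
  proof -
    have "step_approx n l y = 1" for n
      using step_approx_outside[of l y n, OF pos] partial[of n] that by force
    then show ?thesis using LIMSEQ_unique[OF step_approx_tendsto[OF assms, of y]] by simp
  qed
qed

lemma smooth_step_average:
  assumes "pos_summable l"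
  shows "smooth_step l y = integral {y - l 0/2 .. y + l 0/2} (smooth_step (shift_seq l)) / l 0"
proof -
  let ?S = "{y - l 0/2 .. y + l 0/2}"
  have l': "pos_summable (shift_seq l)" by (rule pos_summable_shift_seq[OF assms])
  then have b: "\<And>n y. 0 \<le> step_approx n (shift_seq l) y \<and> step_approx n (shift_seq l) y \<le> 1"
    "\<And>n. mono (step_approx n (shift_seq l))"
    using step_approx_mono_bounded[of "shift_seq l"] by (auto simp: pos_summable_def)
  have "(\<lambda>n. integral ?S (step_approx n (shift_seq l))) \<longlonglongrightarrow> integral ?S (smooth_step (shift_seq l))"
  proof (rule dominated_convergence(2)[where h="\<lambda>_. 1"])
    show "(\<lambda>_. 1::real) integrable_on ?S" by (rule integrable_continuous_real) (rule continuous_on_const)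
  qed (use b step_approx_tendsto[OF l'] in \<open>auto simp: mono_integrable_on\<close>)
  from tendsto_divide[OF this tendsto_const, of "l 0"] pos_summable_pos[OF assms, of 0]
  have "(\<lambda>n. step_approx (Suc n) l y) \<longlonglongrightarrow> integral ?S (smooth_step (shift_seq l)) / l 0"
    by simp
  moreover have "(\<lambda>n. step_approx (Suc n) l y) \<longlonglongrightarrow> smooth_step l y"
    using step_approx_tendsto[OF assms] LIMSEQ_Suc by blast
  ultimately show ?thesis using LIMSEQ_unique by blast
qed

lemma has_real_derivative_window_integral:
  fixes g :: "real \<Rightarrow> real"
  assumes "continuous_on UNIV g" "c \<ge> 0"
  shows "((\<lambda>y. integral {y - c .. y + c} g) has_real_derivative g (y + c) - g (y - c)) (at y)"
proof -
  define a where "a = y - c - 1"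
  define b where "b = y + c + 1"
  define P where "P t = integral {a..t} g" for t
  have cont: "continuous_on {a..b} g" using assms(1) continuous_on_subset by blast
  have dP: "(P has_real_derivative g t) (at t)" if "a < t" "t < b" for t
  proof -
    have "(P has_real_derivative g t) (at t within {a..b})" unfolding P_def
      by (rule integral_has_real_derivative[OF cont]) (use that in auto)
    moreover have "at t within {a..b} = at t" by (rule at_within_interior) (use that in auto)
    ultimately show ?thesis by simp
  qed
  have "((\<lambda>z. P (z + c) - P (z + - c)) has_real_derivative g (y + c) - g (y + - c)) (at y)"
    by (intro DERIV_diff DERIV_shift[THEN iffD1] dP) (use assms in \<open>auto simp: a_def b_def\<close>)
  then have "((\<lambda>z. P (z + c) - P (z - c)) has_real_derivative g (y + c) - g (y - c)) (at y)"
    by simp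
  then show ?thesis
  proof (rule has_field_derivative_transform_within_open[of _ _ _ "ball y 1"])
    fix z
    assume z: "z \<in> ball y 1"
    then have za: "a \<le> z - c" "z - c \<le> z + c" "z + c \<le> b" using assms(2)
      by (auto simp: a_def b_def dist_real_def)
    have "g integrable_on {a..z + c}"
      by (rule integrable_continuous_real) (use cont za in \<open>auto intro: continuous_on_subset\<close>)
    from Henstock_Kurzweil_Integration.integral_combine[OF za(1,2) this]
    show "P (z + c) - P (z - c) = integral {z - c..z + c} g" by (simp add: P_def)
  qed simp_all
qed

fun smooth_step_deriv :: "nat \<Rightarrow> (nat \<Rightarrow> real) \<Rightarrow> real \<Rightarrow> real" where
  "smooth_step_deriv 0 l y = smooth_step l y"
| "smooth_step_deriv (Suc k) l y =
     (smooth_step_deriv k (shift_seq l) (y + l 0 / 2) - smooth_step_deriv k (shift_seq l) (y - l 0 / 2)) / l 0"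

lemma has_real_derivative_smooth_step_deriv:
  assumes "pos_summable l"
  shows "(smooth_step_deriv k l has_real_derivative smooth_step_deriv (Suc k) l y) (at y)"
  using assms
proof (induction k arbitrary: l y)
  case 0
  have l': "pos_summable (shift_seq l)" by (rule pos_summable_shift_seq[OF 0])
  have "smooth_step_deriv 0 l = (\<lambda>y. integral {y - l 0/2 .. y + l 0/2} (smooth_step (shift_seq l)) / l 0)"
    using smooth_step_average[OF 0] by (auto simp: fun_eq_iff)
  moreover have "((\<lambda>y. integral {y - l 0/2 .. y + l 0/2} (smooth_step (shift_seq l)) / l 0) has_real_derivative
      (smooth_step (shift_seq l) (y + l 0/2) - smooth_step (shift_seq l) (y - l 0/2)) / l 0) (at y)"
    using lipschitz_on_continuous_on[OF smooth_step_lipschitz[OF l']] pos_summable_pos[OF 0, of 0]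
    by (intro DERIV_cdivide has_real_derivative_window_integral) auto
  ultimately show ?case by simp
next
  case (Suc k)
  note IH = Suc.IH[OF pos_summable_shift_seq[OF Suc.prems]]
  have "((\<lambda>z. (smooth_step_deriv k (shift_seq l) (z + l 0/2) - smooth_step_deriv k (shift_seq l) (z + - (l 0/2))) / l 0)
      has_real_derivative (smooth_step_deriv (Suc k) (shift_seq l) (y + l 0/2)
        - smooth_step_deriv (Suc k) (shift_seq l) (y + - (l 0/2))) / l 0) (at y)"
    by (intro DERIV_cdivide DERIV_diff DERIV_shift[THEN iffD1] IH)
  then show ?case by simp
qed

lemma abs_smooth_step_deriv_le:
  assumes "pos_summable l"
  shows "\<bar>smooth_step_deriv k l y\<bar> \<le> 2 ^ k / (\<Prod>i<k. l i)"
  using assms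
proof (induction k arbitrary: l y)
  case 0
  then show ?case using smooth_step_mono_bounded[OF 0] by simp
next
  case (Suc k)
  note IH = Suc.IH[OF pos_summable_shift_seq[OF Suc.prems]]
  have l0: "l 0 > 0" using pos_summable_pos[OF Suc.prems] by simp
  have "\<bar>smooth_step_deriv (Suc k) l y\<bar>
      = \<bar>smooth_step_deriv k (shift_seq l) (y + l 0 / 2) - smooth_step_deriv k (shift_seq l) (y - l 0 / 2)\<bar> / l 0"
    using l0 by (simp add: abs_div)
  also have "\<dots> \<le> (2 ^ k / (\<Prod>i<k. shift_seq l i) + 2 ^ k / (\<Prod>i<k. shift_seq l i)) / l 0"
    using IH[of "y + l 0 / 2"] IH[of "y - l 0 / 2"] l0 by (intro divide_right_mono) linarith+
  also have "\<dots> = 2 ^ Suc k / (\<Prod>i<Suc k. l i)"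
    unfolding prod.lessThan_Suc_shift shift_seq_def by simp
  finally show ?case .
qed

lemma smooth_step_deriv_outside:
  assumes "pos_summable l" "\<bar>y\<bar> > suminf l / 2"
  shows "smooth_step_deriv (Suc k) l y = 0"
  using assms
proof (induction k arbitrary: l y)
  case 0
  have l': "pos_summable (shift_seq l)" by (rule pos_summable_shift_seq[OF 0(1)])
  have sum: "suminf l = l 0 + suminf (shift_seq l)" by (rule suminf_shift_seq[OF 0(1)])
  have l0: "l 0 > 0" using pos_summable_pos[OF 0(1)] by simp
  show ?case
    using smooth_step_outside[OF l', of "y + l 0/2"] smooth_step_outside[OF l', of "y - l 0/2"] 0(2) sum l0
    by (cases "y > 0") auto
next
  case (Suc k)
  have "\<bar>y + l 0 / 2\<bar> > suminf (shift_seq l) / 2" "\<bar>y - l 0 / 2\<bar> > suminf (shift_seq l) / 2"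
    using Suc.prems suminf_shift_seq[OF Suc.prems(1)] pos_summable_pos[OF Suc.prems(1), of 0] by linarith+
  with Suc.IH[OF pos_summable_shift_seq[OF Suc.prems(1)]] show ?case
    by (simp del: smooth_step_deriv.simps(2) add: smooth_step_deriv.simps(2)[of "Suc k"])
qed

definition cutoff_deriv :: "nat \<Rightarrow> (nat \<Rightarrow> real) \<Rightarrow> real \<Rightarrow> real" where
  "cutoff_deriv k l x = smooth_step_deriv k l (x + suminf l) - smooth_step_deriv k l (x - suminf l)"

lemma has_real_derivative_cutoff_deriv:
  assumes "pos_summable l"
  shows "(cutoff_deriv k l has_real_derivative cutoff_deriv (Suc k) l x) (at x)"
proof -
  have "((\<lambda>z. smooth_step_deriv k l (z + suminf l) - smooth_step_deriv k l (z + - suminf l))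
      has_real_derivative smooth_step_deriv (Suc k) l (x + suminf l) - smooth_step_deriv (Suc k) l (x + - suminf l)) (at x)"
    by (intro DERIV_diff DERIV_shift[THEN iffD1] has_real_derivative_smooth_step_deriv[OF assms])
  then show ?thesis by (simp add: cutoff_deriv_def[abs_def])
qed

lemma abs_cutoff_deriv_le:
  assumes "pos_summable l"
  shows "\<bar>cutoff_deriv k l x\<bar> \<le> 2 * 2 ^ k / (\<Prod>i<k. l i)"
  using abs_smooth_step_deriv_le[OF assms, of k "x + suminf l"] abs_smooth_step_deriv_le[OF assms, of k "x - suminf l"]
  unfolding cutoff_deriv_def by linarith

lemma cutoff_deriv_outside:
  assumes "pos_summable l" "\<bar>x\<bar> > 3 / 2 * suminf l"
  shows "cutoff_deriv k l x = 0"
proof (cases k)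
  case 0
  then show ?thesis
    using smooth_step_outside[OF assms(1), of "x + suminf l"] smooth_step_outside[OF assms(1), of "x - suminf l"]
      assms(2) pos_summable_suminf_pos[OF assms(1)]
    by (cases "x > 0") (auto simp: cutoff_deriv_def)
next
  case (Suc k')
  have "\<bar>x + suminf l\<bar> > suminf l / 2" "\<bar>x - suminf l\<bar> > suminf l / 2"
    using assms(2) pos_summable_suminf_pos[OF assms(1)] by linarith+
  then show ?thesis
    using smooth_step_deriv_outside[OF assms(1)] unfolding cutoff_deriv_def Suc by (simp del: smooth_step_deriv.simps)
qed

lemma cutoff_deriv_at_0:
  assumes "pos_summable l"
  shows "cutoff_deriv k l 0 = (if k = 0 then 1 else 0)"
proof (cases k)
  case 0
  then show ?thesis
    using smooth_step_outside[OF assms, of "suminf l"] smooth_step_outside[OF assms, of "- suminf l"]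
      pos_summable_suminf_pos[OF assms]
    by (simp add: cutoff_deriv_def)
next
  case (Suc k')
  have "\<bar>0 + suminf l\<bar> > suminf l / 2" "\<bar>0 - suminf l\<bar> > suminf l / 2"
    using pos_summable_suminf_pos[OF assms] by simp_all
  then show ?thesis
    using smooth_step_deriv_outside[OF assms] unfolding cutoff_deriv_def Suc by (simp del: smooth_step_deriv.simps)
qed

section \<open>Leibniz rule and termwise differentiation\<close>

lemma leibniz_sum_step:
  fixes A B :: "nat \<Rightarrow> real \<Rightarrow> real"
  shows "(\<Sum>m\<le>k. real (k choose m) * (A (Suc k - m) x * B m x + A (k - m) x * B (Suc m) x))
       = (\<Sum>m\<le>Suc k. real (Suc k choose m) * A (Suc k - m) x * B m x)"
proof -
  have "(\<Sum>m\<le>k. real (k choose m) * A (Suc k - m) x * B m x)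
      = (\<Sum>m\<le>Suc k. real (k choose m) * A (Suc k - m) x * B m x)"
    by simp
  also have "\<dots> = A (Suc k) x * B 0 x + (\<Sum>m\<le>k. real (k choose Suc m) * A (k - m) x * B (Suc m) x)"
    by (subst sum.atMost_Suc_shift) simp
  finally have first: "(\<Sum>m\<le>k. real (k choose m) * A (Suc k - m) x * B m x)
      = A (Suc k) x * B 0 x + (\<Sum>m\<le>k. real (k choose Suc m) * A (k - m) x * B (Suc m) x)" .
  have "(\<Sum>m\<le>k. real (k choose m) * (A (Suc k - m) x * B m x + A (k - m) x * B (Suc m) x))
      = (\<Sum>m\<le>k. real (k choose m) * A (Suc k - m) x * B m x)
        + (\<Sum>m\<le>k. real (k choose m) * A (k - m) x * B (Suc m) x)"
    by (simp add: sum.distrib[symmetric] algebra_simps)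
  also have "\<dots> = A (Suc k) x * B 0 x
      + (\<Sum>m\<le>k. (real (k choose m) + real (k choose Suc m)) * A (k - m) x * B (Suc m) x)"
    unfolding first by (simp add: sum.distrib[symmetric] algebra_simps)
  also have "\<dots> = (\<Sum>m\<le>Suc k. real (Suc k choose m) * A (Suc k - m) x * B m x)"
    by (subst sum.atMost_Suc_shift) simp
  finally show ?thesis .
qed

lemma has_real_derivative_leibniz_sum:
  fixes A B :: "nat \<Rightarrow> real \<Rightarrow> real"
  assumes dA: "\<And>k x. (A k has_real_derivative A (Suc k) x) (at x)"
    and dB: "\<And>k x. (B k has_real_derivative B (Suc k) x) (at x)"
  shows "((\<lambda>x. \<Sum>m\<le>k. real (k choose m) * A (k - m) x * B m x) has_real_derivative
          (\<Sum>m\<le>Suc k. real (Suc k choose m) * A (Suc k - m) x * B m x)) (at x)"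
proof -
  have "((\<lambda>x. \<Sum>m\<le>k. real (k choose m) * A (k - m) x * B m x) has_real_derivative
        (\<Sum>m\<le>k. real (k choose m) * (A (Suc (k - m)) x * B m x + A (k - m) x * B (Suc m) x))) (at x)"
  proof (rule DERIV_sum)
    fix m
    have "((\<lambda>x. A (k - m) x * B m x) has_real_derivative A (Suc (k - m)) x * B m x + A (k - m) x * B (Suc m) x) (at x)"
      using DERIV_mult[OF dA[of "k - m" x] dB[of m x]] by (simp add: algebra_simps)
    from DERIV_cmult[OF this, of "real (k choose m)"]
    show "((\<lambda>x. real (k choose m) * A (k - m) x * B m x) has_real_derivative
        real (k choose m) * (A (Suc (k - m)) x * B m x + A (k - m) x * B (Suc m) x)) (at x)"
      by (simp add: mult.assoc)
  qed
  moreover have "(\<Sum>m\<le>k. real (k choose m) * (A (Suc (k - m)) x * B m x + A (k - m) x * B (Suc m) x))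
       = (\<Sum>m\<le>k. real (k choose m) * (A (Suc k - m) x * B m x + A (k - m) x * B (Suc m) x))"
    by (intro sum.cong refl) (simp add: Suc_diff_le)
  ultimately show ?thesis using leibniz_sum_step[of k A x B] by simp
qed

definition monomial_deriv :: "nat \<Rightarrow> nat \<Rightarrow> real \<Rightarrow> real" where
  "monomial_deriv j k x = (if k \<le> j then x ^ (j - k) / fact (j - k) else 0)"

lemma has_real_derivative_monomial_deriv:
  "(monomial_deriv j k has_real_derivative monomial_deriv j (Suc k) x) (at x)"
proof (cases "k < j")
  case True
  then obtain n where n: "j - k = Suc n" "j - Suc k = n" by (metis Suc_diff_Suc)
  have "((\<lambda>x. x ^ Suc n / fact (Suc n)) has_real_derivative real (Suc n) * x ^ n / fact (Suc n)) (at x)"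
    by (rule DERIV_cdivide) (use DERIV_pow[of "Suc n" x UNIV] in simp)
  moreover have "real (Suc n) * x ^ n / fact (Suc n) = x ^ n / fact n"
    unfolding fact_Suc[of n] of_nat_mult by (simp del: of_nat_Suc)
  moreover have "monomial_deriv j k = (\<lambda>x. x ^ Suc n / fact (Suc n))"
    using True n by (auto simp: monomial_deriv_def fun_eq_iff)
  ultimately show ?thesis using True n by (simp add: monomial_deriv_def)
next
  case False
  then have "monomial_deriv j k = (\<lambda>x. if k = j then 1 else 0)"
    by (auto simp: monomial_deriv_def fun_eq_iff)
  then show ?thesis using False by (simp add: monomial_deriv_def)
qed

lemma monomial_deriv_at_0: "monomial_deriv j k 0 = (if k = j then 1 else 0)"
  by (auto simp: monomial_deriv_def)

lemma abs_monomial_deriv_le: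
  "\<bar>x\<bar> \<le> R \<Longrightarrow> k \<le> j \<Longrightarrow> \<bar>monomial_deriv j k x\<bar> \<le> R ^ (j - k) / fact (j - k)"
  by (simp add: monomial_deriv_def abs_mult power_abs divide_right_mono power_mono)

lemma has_real_derivative_suminf_dominated:
  fixes f :: "nat \<Rightarrow> nat \<Rightarrow> real \<Rightarrow> real"
  assumes deriv: "\<And>j k x. (f j k has_real_derivative f j (Suc k) x) (at x)"
    and dominated: "\<And>j k x. \<bar>f j k x\<bar> \<le> B k j" and summable: "\<And>k. summable (B k)"
  shows "((\<lambda>x. \<Sum>j. f j k x) has_real_derivative (\<Sum>j. f j (Suc k) x)) (at x)"
proof -
  have "uniformly_convergent_on UNIV (\<lambda>n x. \<Sum>j<n. f j (Suc k) x)"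
    unfolding uniformly_convergent_on_def
    by (rule exI, rule Weierstrass_m_test_ev[OF _ summable[of "Suc k"]])
      (use dominated in \<open>simp add: always_eventually\<close>)
  moreover have "summable (\<lambda>j. f j k 0)"
    by (rule summable_comparison_test[OF _ summable[of k]]) (use dominated in auto)
  ultimately show ?thesis
    using has_field_derivative_series'(2)[OF convex_UNIV _ _ _ _, of "\<lambda>j. f j k" "\<lambda>j. f j (Suc k)" 0 x] deriv
    by simp
qed

lemma powr_inverse_power: "a > 0 \<Longrightarrow> p > 0 \<Longrightarrow> (a powr (1 / real p)) ^ p = (a::real)"
  by (simp add: powr_realpow[symmetric] powr_powr)

lemma power_le_imp_le_base_ge_1:
  fixes a b :: real
  assumes "n \<ge> 1" "a ^ n \<le> b ^ n" "0 \<le> b"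
  shows "a \<le> b"
  using power_le_imp_le_base[of a "n - 1" b] assms by simp

lemma power_le_max_one_power:
  fixes C :: real
  assumes "p \<le> q" "C > 0"
  shows "C ^ p \<le> max 1 C ^ q"
proof -
  have "C ^ p \<le> max 1 C ^ p" using assms by (intro power_mono) auto
  also have "\<dots> \<le> max 1 C ^ q" using assms by (intro power_increasing) auto
  finally show ?thesis .
qed

lemma power_div_fact_le_exp:
  fixes x :: real
  assumes "x \<ge> 0"
  shows "x ^ q / fact q \<le> exp x"
proof -
  have "x ^ q / fact q \<le> (\<Sum>n<Suc q. x ^ n / fact n)"
    using assms by (simp add: sum_nonneg)
  also have "\<dots> \<le> (\<Sum>n. x ^ n / fact n)"
    using summable_exp[of x] assms by (intro sum_le_suminf) (auto simp: divide_inverse mult.commute)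
  also have "\<dots> = exp x"
    unfolding exp_def by (simp add: divide_inverse mult.commute scaleR_conv_of_real)
  finally show ?thesis .
qed

lemma power_ratio_le_exp:
  fixes x :: real
  assumes "x \<ge> 0"
  shows "(x / real k) ^ k \<le> exp x"
proof -
  have "(x / real k) ^ k = x ^ k / real (k ^ k)" by (simp add: power_divide)
  also have "\<dots> \<le> x ^ k / fact k"
  proof (rule divide_left_mono)
    have "0 < k ^ k" by auto
    then show "0 < real (k ^ k) * fact k" by (simp del: of_nat_power)
  qed (use assms fact_le_power[of k] in auto)
  also have "\<dots> \<le> exp x" by (rule power_div_fact_le_exp[OF assms])
  finally show ?thesis .
qed

lemma abs_monomial_deriv_le_exp:
  assumes "\<bar>x\<bar> \<le> 3 * real j * L" "L \<ge> 0" "p \<le> j"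
  shows "\<bar>monomial_deriv j p x\<bar> \<le> (3 * exp 1) ^ j * L ^ (j - p)"
proof -
  have "\<bar>monomial_deriv j p x\<bar> \<le> (3 * real j * L) ^ (j - p) / fact (j - p)"
    by (rule abs_monomial_deriv_le[OF assms(1,3)])
  also have "\<dots> = 3 ^ (j - p) * L ^ (j - p) * (real j ^ (j - p) / fact (j - p))"
    by (simp add: power_mult_distrib)
  also have "\<dots> \<le> 3 ^ j * L ^ (j - p) * exp (real j)"
    using assms(2) power_div_fact_le_exp[of "real j" "j - p"]
    by (intro mult_mono mult_right_mono power_increasing) auto
  also have "\<dots> = (3 * exp 1) ^ j * L ^ (j - p)"
    by (simp add: exp_of_nat_mult[symmetric] power_mult_distrib)
  finally show ?thesis .
qed

lemma prod_le_mean_power: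
  fixes x :: "'a \<Rightarrow> real"
  assumes "finite A" "A \<noteq> {}" "\<And>a. a \<in> A \<Longrightarrow> x a > 0"
  shows "(\<Prod>a\<in>A. x a) \<le> ((\<Sum>a\<in>A. x a) / card A) ^ card A"
proof -
  have "(\<Prod>a\<in>A. x a) powr (1 / card A) \<le> (\<Sum>a\<in>A. x a) / card A"
    using arith_geom_mean[OF assms(1,2)] assms(3) by (simp add: sum_divide_distrib less_imp_le)
  then have "((\<Prod>a\<in>A. x a) powr (1 / card A)) ^ card A \<le> ((\<Sum>a\<in>A. x a) / card A) ^ card A"
    by (rule power_mono) simp
  moreover have "card A > 0" using assms(1,2) by (simp add: card_gt_0_iff)
  ultimately show ?thesis
    using powr_inverse_power[of "\<Prod>a\<in>A. x a" "card A"] assms(3) by (simp add: prod_pos)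
qed

lemma weight_seq_pos: "weight_seq M \<Longrightarrow> M k > 0"
  by (simp add: weight_seq_def)

lemma mu_le: "weight_seq M \<Longrightarrow> a \<le> b \<Longrightarrow> mu M a \<le> mu M b"
  unfolding weight_seq_def by (metis lift_Suc_mono_le)

lemma mu_ge_1: "weight_seq M \<Longrightarrow> mu M k \<ge> 1"
  using mu_le[of M 0 k] by (simp add: mu_def)

lemma mu_pos: "weight_seq M \<Longrightarrow> mu M k > 0"
  using mu_ge_1[of M k] by simp

lemma weight_seq_ratio_eq_prod: "weight_seq M \<Longrightarrow> M (a + d) / M a = (\<Prod>u\<in>{a<..a+d}. mu M u)"
proof (induction d)
  case 0
  then show ?case using weight_seq_pos[of M a] by simp
next
  case (Suc d)
  have "{a<..a + Suc d} = insert (Suc (a + d)) {a<..a+d}" by auto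
  moreover have "M (Suc (a + d)) / M a = M (a + d) / M a * mu M (Suc (a + d))"
    using weight_seq_pos[OF Suc.prems, of "a + d"] weight_seq_pos[OF Suc.prems, of a]
    by (simp add: mu_def)
  ultimately show ?case using Suc by (simp add: mult_ac)
qed

lemma weight_seq_mono: "weight_seq M \<Longrightarrow> a \<le> b \<Longrightarrow> M a \<le> M b"
proof -
  assume w: "weight_seq M" and "a \<le> b"
  then obtain d where b: "b = a + d" using le_Suc_ex by blast
  have "1 \<le> (\<Prod>u\<in>{a<..a+d}. mu M u)" by (rule prod_ge_1) (use mu_ge_1[OF w] in auto)
  then have "1 \<le> M (a + d) / M a" using weight_seq_ratio_eq_prod[OF w, of a d] by simp
  then show "M a \<le> M b" unfolding b using weight_seq_pos[OF w, of a] by (simp add: le_divide_eq)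
qed

lemma weight_seq_ge_1: "weight_seq M \<Longrightarrow> M k \<ge> 1"
  using weight_seq_mono[of M 0 k] by (simp add: weight_seq_def)

definition mu_tail :: "(nat \<Rightarrow> real) \<Rightarrow> nat \<Rightarrow> real" where
  "mu_tail M k = (\<Sum>i. 1 / mu M (i + k))"

lemma summable_mu_tail: "nonquasianalytic M \<Longrightarrow> summable (\<lambda>i. 1 / mu M (i + k))"
  unfolding nonquasianalytic_def using summable_iff_shift[of "\<lambda>k. 1 / mu M k" k] by simp

lemma mu_tail_pos: "weight_seq M \<Longrightarrow> nonquasianalytic M \<Longrightarrow> mu_tail M k > 0"
  unfolding mu_tail_def by (rule suminf_pos[OF summable_mu_tail]) (use mu_pos in auto)

lemma sum_inverse_mu_le_mu_tail:
  assumes "weight_seq M" "nonquasianalytic M"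
  shows "(\<Sum>u\<in>{a<..a+d}. 1 / mu M u) \<le> mu_tail M (Suc a)"
proof -
  have "{a<..a+d} = (\<lambda>i. i + Suc a) ` {..<d}"
  proof (intro equalityI subsetI)
    fix u
    assume "u \<in> {a<..a + d}"
    then show "u \<in> (\<lambda>i. i + Suc a) ` {..<d}" by (intro image_eqI[of _ _ "u - Suc a"]) auto
  qed auto
  then have "(\<Sum>u\<in>{a<..a+d}. 1 / mu M u) = (\<Sum>i<d. 1 / mu M (i + Suc a))"
    by (simp add: sum.reindex inj_on_def)
  also have "\<dots> \<le> mu_tail M (Suc a)" unfolding mu_tail_def
    by (rule sum_le_suminf[OF summable_mu_tail[OF assms(2)]])
      (use mu_pos[OF assms(1)] in \<open>auto simp: less_imp_le\<close>)
  finally show ?thesis .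
qed

section \<open>The lengths of the cutoffs\<close>

definition block_scale :: "(nat \<Rightarrow> real) \<Rightarrow> nat \<Rightarrow> nat \<Rightarrow> real" where
  "block_scale M n j = mu_tail M (n * j) / real (n * j)"

text \<open>For \<open>j = 0\<close> the scale is the junk value \<open>T(0)/0 = 0\<close>, so there it is left out.\<close>
definition block_lengths :: "(nat \<Rightarrow> real) \<Rightarrow> nat \<Rightarrow> nat \<Rightarrow> nat \<Rightarrow> real" where
  "block_lengths M n j i =
    (if j = 0 then 1 / mu M (n * (i + 1)) else min (block_scale M n j) (1 / mu M (n * (i + 1))))"

lemma prod_max_le_power_prod:
  fixes \<nu> :: "nat \<Rightarrow> real"
  assumes "mono \<nu>" "\<And>t. \<nu> t > 0" "x > 0"
  shows "\<exists>r\<le>m. (\<Prod>i<m. max x (\<nu> (i + 1))) \<le> x ^ r * (\<Prod>t\<in>{r..<m}. \<nu> (t + 1))"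
proof (induction m)
  case 0
  then show ?case by simp
next
  case (Suc m)
  then obtain r where r: "r \<le> m" "(\<Prod>i<m. max x (\<nu> (i + 1))) \<le> x ^ r * (\<Prod>t\<in>{r..<m}. \<nu> (t + 1))"
    by blast
  show ?case
  proof (cases "\<nu> (m + 1) \<le> x")
    case True
    have "(\<Prod>t\<in>{r..<m}. \<nu> (t + 1)) \<le> (\<Prod>t\<in>{r..<m}. \<nu> (Suc t + 1))"
      by (rule prod_mono) (use assms in \<open>auto simp: less_imp_le mono_def\<close>)
    also have "\<dots> = (\<Prod>t\<in>{Suc r..<Suc m}. \<nu> (t + 1))"
      by (rule prod.shift_bounds_Suc_ivl[symmetric])
    finally have shift: "(\<Prod>t\<in>{r..<m}. \<nu> (t + 1)) \<le> (\<Prod>t\<in>{Suc r..<Suc m}. \<nu> (t + 1))" .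
    have "(\<Prod>i<Suc m. max x (\<nu> (i + 1))) = (\<Prod>i<m. max x (\<nu> (i + 1))) * x" using True by simp
    also have "\<dots> \<le> x ^ r * (\<Prod>t\<in>{r..<m}. \<nu> (t + 1)) * x"
      using r(2) assms(3) by (simp add: mult_right_mono)
    also have "\<dots> \<le> x ^ r * (\<Prod>t\<in>{Suc r..<Suc m}. \<nu> (t + 1)) * x"
      using shift assms(3) by (intro mult_right_mono mult_left_mono) auto
    also have "\<dots> = x ^ Suc r * (\<Prod>t\<in>{Suc r..<Suc m}. \<nu> (t + 1))" by (simp add: mult_ac)
    finally show ?thesis using r(1) by (intro exI[of _ "Suc r"]) auto
  next
    case False
    have "(\<Prod>i<Suc m. max x (\<nu> (i + 1))) = (\<Prod>i<m. max x (\<nu> (i + 1))) * \<nu> (m + 1)"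
      using False by simp
    also have "\<dots> \<le> x ^ r * (\<Prod>t\<in>{r..<m}. \<nu> (t + 1)) * \<nu> (m + 1)"
      using r(2) assms(2)[of "m+1"] by (simp add: mult_right_mono)
    also have "\<dots> = x ^ r * (\<Prod>t\<in>{r..<Suc m}. \<nu> (t + 1))"
      using r(1) by (simp add: prod.atLeastLessThan_Suc mult_ac)
    finally show ?thesis using r(1) by (intro exI[of _ r]) auto
  qed
qed

lemma prod_inverse_block_lengths_0:
  "(\<Prod>i<m. 1 / block_lengths M n 0 i) = (\<Prod>t\<in>{0..<m}. mu M (n * (t + 1)))"
  by (simp add: block_lengths_def atLeast0LessThan)

locale nonquasianalytic_weight =
  fixes M :: "nat \<Rightarrow> real"
  assumes weight: "weight_seq M" and nonquasi: "nonquasianalytic M"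
begin

lemmas M_pos = weight_seq_pos[OF weight]
  and M_mono = weight_seq_mono[OF weight]
  and M_ge_1 = weight_seq_ge_1[OF weight]
  and mu_pos = mu_pos[OF weight]
  and mu_le = mu_le[OF weight]

lemma block_scale_pos: "n \<ge> 1 \<Longrightarrow> j \<ge> 1 \<Longrightarrow> block_scale M n j > 0"
  unfolding block_scale_def using mu_tail_pos[OF weight nonquasi, of "n*j"] by simp

lemma pos_summable_block_lengths:
  assumes "n \<ge> 1"
  shows "pos_summable (block_lengths M n j)"
  unfolding pos_summable_def
proof
  show pos: "\<forall>i. 0 < block_lengths M n j i"
    using block_scale_pos[OF assms] mu_pos by (auto simp: block_lengths_def)
  have "norm (block_lengths M n j i) \<le> 1 / mu M (i + 1)" for i
  proof -
    have "1 * (i + 1) \<le> n * (i + 1)" by (rule mult_le_mono1[OF assms])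
    then have "mu M (i + 1) \<le> mu M (n * (i + 1))" by (intro mu_le) simp
    then have "1 / mu M (n * (i + 1)) \<le> 1 / mu M (i + 1)" using mu_pos by (simp add: frac_le)
    moreover have "block_lengths M n j i \<le> 1 / mu M (n * (i + 1))" by (simp add: block_lengths_def)
    ultimately show ?thesis using pos[rule_format, of i] by simp
  qed
  then show "summable (block_lengths M n j)"
    by (rule summable_comparison_test'[OF summable_mu_tail[OF nonquasi, of 1]])
qed

lemma sum_inverse_mu_blocks_le:
  "real n * (\<Sum>i<K. 1 / mu M (n * (i + j + 1))) \<le> (\<Sum>u\<in>{n*j<..n*j + n*K}. 1 / mu M u)"
proof (induction K)
  case 0
  then show ?case by simp
next
  case (Suc K)
  have "real (card {n*j + n*K<..n*j + n*K + n}) * (1 / mu M (n * (K + j + 1)))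
      \<le> (\<Sum>u\<in>{n*j + n*K<..n*j + n*K + n}. 1 / mu M u)"
  proof (rule sum_bounded_below)
    fix u
    assume "u \<in> {n*j + n*K<..n*j + n*K + n}"
    then have "mu M u \<le> mu M (n * (K + j + 1))" by (intro mu_le) (simp add: algebra_simps)
    then show "1 / mu M (n * (K + j + 1)) \<le> 1 / mu M u" using mu_pos by (simp add: frac_le)
  qed
  then have last: "real n * (1 / mu M (n * (K + j + 1))) \<le> (\<Sum>u\<in>{n*j + n*K<..n*j + n*K + n}. 1 / mu M u)"
    by simp
  have "{n*j<..n*j + n * Suc K} = {n*j<..n*j + n*K} \<union> {n*j + n*K<..n*j + n*K + n}"
    "{n*j<..n*j + n*K} \<inter> {n*j + n*K<..n*j + n*K + n} = {}"
    by auto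
  then have "(\<Sum>u\<in>{n*j<..n*j + n * Suc K}. 1 / mu M u)
      = (\<Sum>u\<in>{n*j<..n*j + n*K}. 1 / mu M u) + (\<Sum>u\<in>{n*j + n*K<..n*j + n*K + n}. 1 / mu M u)"
    by (simp add: sum.union_disjoint)
  then show ?case using Suc last by (simp add: algebra_simps)
qed

lemma suminf_block_lengths_le:
  assumes "n \<ge> 1" "j \<ge> 1"
  shows "suminf (block_lengths M n j) \<le> 2 * real j * block_scale M n j"
proof -
  let ?l = "block_lengths M n j"
  have sl: "summable ?l" using pos_summable_block_lengths[OF assms(1)] by (simp add: pos_summable_def)
  have jl: "real j * block_scale M n j = mu_tail M (n * j) / real n"
    using assms by (simp add: block_scale_def)
  have head: "(\<Sum>i<j. ?l i) \<le> real j * block_scale M n j"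
    using sum_mono[of "{..<j}" ?l "\<lambda>_. block_scale M n j"] assms(2) by (simp add: block_lengths_def)
  have tail: "(\<Sum>i. ?l (i + j)) \<le> real j * block_scale M n j"
  proof (rule suminf_le_const)
    show "summable (\<lambda>i. ?l (i + j))" using sl summable_iff_shift[of ?l j] by simp
    fix K
    have "(\<Sum>i<K. ?l (i + j)) \<le> (\<Sum>i<K. 1 / mu M (n * (i + j + 1)))"
      by (rule sum_mono) (auto simp: block_lengths_def)
    then have "real n * (\<Sum>i<K. ?l (i + j)) \<le> real n * (\<Sum>i<K. 1 / mu M (n * (i + j + 1)))"
      by (rule mult_left_mono) simp
    also have "\<dots> \<le> (\<Sum>u\<in>{n*j<..n*j + n*K}. 1 / mu M u)"
      by (rule sum_inverse_mu_blocks_le)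
    also have "\<dots> \<le> (\<Sum>u\<in>{n*j - 1<..n*j - 1 + (n*K + 1)}. 1 / mu M u)"
    proof (rule sum_mono2)
      show "{n * j<..n * j + n * K} \<subseteq> {n * j - 1<..n * j - 1 + (n * K + 1)}" using assms by auto
    qed (simp_all add: mu_pos less_imp_le)
    also have "\<dots> \<le> mu_tail M (n * j)"
      using sum_inverse_mu_le_mu_tail[OF weight nonquasi, of "n*j - 1" "n*K + 1"] assms by simp
    finally have "real n * (\<Sum>i<K. ?l (i + j)) \<le> mu_tail M (n * j)" .
    then show "(\<Sum>i<K. ?l (i + j)) \<le> real j * block_scale M n j"
      unfolding jl using assms(1) by (simp add: le_divide_eq mult.commute)
  qed
  show ?thesis
    using suminf_split_initial_segment[OF sl, of j] head tail by simp
qed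

lemma prod_inverse_block_lengths_le:
  assumes "n \<ge> 1" "j \<ge> 1"
  shows "\<exists>r\<le>m. (\<Prod>i<m. 1 / block_lengths M n j i)
    \<le> (1 / block_scale M n j) ^ r * (\<Prod>t\<in>{r..<m}. mu M (n * (t + 1)))"
proof -
  have scale: "block_scale M n j > 0" by (rule block_scale_pos[OF assms])
  have "1 / block_lengths M n j i = max (1 / block_scale M n j) (mu M (n * (i + 1)))" for i
    using scale assms(2) mu_pos[of "n * (i + 1)"]
    by (auto simp: block_lengths_def min_def max_def field_simps)
  moreover have "mono (\<lambda>t. mu M (n * t))" by (rule monoI) (simp add: mu_le)
  ultimately show ?thesis
    using prod_max_le_power_prod[of "\<lambda>t. mu M (n * t)" "1 / block_scale M n j" m] mu_pos scale by auto
qed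

lemma prod_mu_power_le_ratio:
  assumes "r \<le> m" "c \<ge> n * (r + 1)"
  shows "(\<Prod>t\<in>{r..<m}. mu M (n * (t + 1))) ^ n \<le> M (c + n * (m - r)) / M c"
proof -
  obtain d where md: "m = r + d" using assms(1) le_Suc_ex by blast
  have "(\<Prod>t\<in>{r..<r + d}. mu M (n * (t + 1))) ^ n \<le> M (c + n * d) / M c"
  proof (induction d)
    case 0
    then show ?case using M_pos[of c] by simp
  next
    case (Suc d)
    have "mu M (n * (r + d + 1)) ^ n = (\<Prod>u\<in>{c + n*d<..c + n*d + n}. mu M (n * (r + d + 1)))"
      by simp
    also have "\<dots> \<le> (\<Prod>u\<in>{c + n*d<..c + n*d + n}. mu M u)"
    proof (rule prod_mono)
      fix u
      assume "u \<in> {c + n*d<..c + n*d + n}"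
      then have "n * (r + d + 1) \<le> u" using assms(2) by (simp add: algebra_simps)
      then show "0 \<le> mu M (n * (r + d + 1)) \<and> mu M (n * (r + d + 1)) \<le> mu M u"
        using mu_le mu_pos by (simp add: less_imp_le)
    qed
    also have "\<dots> = M (c + n * d + n) / M (c + n * d)"
      using weight_seq_ratio_eq_prod[OF weight, of "c + n*d" n] by simp
    finally have step: "mu M (n * (r + d + 1)) ^ n \<le> M (c + n * d + n) / M (c + n * d)" .
    have "(\<Prod>t\<in>{r..<r + Suc d}. mu M (n * (t + 1))) ^ n
        = (\<Prod>t\<in>{r..<r + d}. mu M (n * (t + 1))) ^ n * mu M (n * (r + d + 1)) ^ n"
      by (simp add: prod.atLeastLessThan_Suc power_mult_distrib)
    also have "\<dots> \<le> (M (c + n * d) / M c) * (M (c + n * d + n) / M (c + n * d))"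
      by (rule mult_mono[OF Suc step]) (use M_pos mu_pos in \<open>auto intro!: divide_nonneg_nonneg less_imp_le\<close>)
    also have "\<dots> = M (c + n * Suc d) / M c"
      using M_pos[of "c + n*d"] by (simp add: algebra_simps)
    finally show ?case .
  qed
  then show ?thesis using md by simp
qed

text \<open>AM-GM on the \<open>nk\<close> quotients \<open>1/\<mu>\<^sub>u\<close>, \<open>nj \<le> u < n(j+k)\<close>, whose sum is at most
  \<open>T(nj) = nj \<lambda>\<^sub>j\<close>.\<close>
lemma inverse_block_scale_power_le:
  assumes "n \<ge> 1" "j \<ge> 1" "k \<ge> 1"
  shows "(1 / block_scale M n j) ^ (n*k) \<le> exp 1 ^ (n*j) * (M (n*j + n*k - 1) / M (n*j - 1))"
proof -
  define a where "a = n*j - 1"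
  define d where "d = n * k"
  define S where "S = (\<Sum>u\<in>{a<..a+d}. 1 / mu M u)"
  have nj: "real (n * j) > 0" using assms by simp
  have d0: "d > 0" unfolding d_def using assms by simp
  have S0: "S > 0" unfolding S_def using d0 mu_pos by (intro sum_pos) auto
  have "M a / M (a + d) = (\<Prod>u\<in>{a<..a+d}. 1 / mu M u)"
    using weight_seq_ratio_eq_prod[OF weight, of a d, symmetric] by (simp add: prod_dividef)
  also have "\<dots> \<le> (S / real d) ^ d"
    unfolding S_def using prod_le_mean_power[of "{a<..a+d}" "\<lambda>u. 1 / mu M u"] d0 mu_pos by simp
  finally have AM_GM: "(real d / S) ^ d \<le> M (a + d) / M a"
    using M_pos[of a] M_pos[of "a+d"] S0 d0 by (simp add: field_simps)
  have "S \<le> mu_tail M (n*j)" unfolding S_def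
    using sum_inverse_mu_le_mu_tail[OF weight nonquasi, of a d] assms by (simp add: a_def)
  then have scale: "1 / block_scale M n j \<le> real (n*j) / S"
    unfolding block_scale_def using S0 nj by (simp add: field_simps del: of_nat_mult)
  have exp: "(real j / real k) ^ d \<le> exp 1 ^ (n*j)"
  proof -
    have "(real j / real k) ^ d = ((real j / real k) ^ k) ^ n"
      by (simp add: d_def power_mult[symmetric] mult.commute)
    also have "\<dots> \<le> exp (real j) ^ n" by (intro power_mono power_ratio_le_exp) auto
    also have "\<dots> = exp 1 ^ (n*j)" by (simp add: exp_of_nat_mult[symmetric] power_mult[symmetric] mult.commute)
    finally show ?thesis .
  qed
  have "(1 / block_scale M n j) ^ d \<le> (real (n*j) / S) ^ d"
    using scale block_scale_pos[OF assms(1,2)] by (intro power_mono) auto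
  also have "\<dots> = (real j / real k) ^ d * (real d / S) ^ d"
  proof -
    have "real (n*j) / S = (real j / real k) * (real d / S)" using assms(3) by (simp add: d_def field_simps)
    then show ?thesis by (simp only: power_mult_distrib)
  qed
  also have "\<dots> \<le> exp 1 ^ (n*j) * (M (a + d) / M a)"
    using exp AM_GM S0 by (intro mult_mono) auto
  finally show ?thesis using assms unfolding a_def d_def by simp
qed

end

text \<open>The \<open>k\<close>-th derivative of \<open>g_j(x) = x^j/j! chi_j(x)\<close>.\<close>
definition block :: "(nat \<Rightarrow> real) \<Rightarrow> nat \<Rightarrow> nat \<Rightarrow> nat \<Rightarrow> real \<Rightarrow> real" where
  "block M n j k x =
    (\<Sum>m\<le>k. real (k choose m) * monomial_deriv j (k - m) x * cutoff_deriv m (block_lengths M n j) x)"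

context nonquasianalytic_weight
begin

lemma has_real_derivative_block:
  assumes "n \<ge> 1"
  shows "(block M n j k has_real_derivative block M n j (Suc k) x) (at x)"
  using has_real_derivative_leibniz_sum[of "monomial_deriv j" "\<lambda>m. cutoff_deriv m (block_lengths M n j)" k x]
    has_real_derivative_monomial_deriv
    has_real_derivative_cutoff_deriv[OF pos_summable_block_lengths[OF assms]]
  by (simp add: block_def[abs_def])

lemma block_at_0:
  assumes "n \<ge> 1"
  shows "block M n j k 0 = (if j = k then 1 else 0)"
proof -
  have "block M n j k 0 = (\<Sum>m\<le>k. (if m = 0 then (if j = k then 1 else 0) else 0))"
    unfolding block_def
    by (intro sum.cong refl)
      (auto simp: monomial_deriv_at_0 cutoff_deriv_at_0[OF pos_summable_block_lengths[OF assms]])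
  also have "\<dots> = (if j = k then 1 else 0)" by simp
  finally show ?thesis .
qed

lemma abs_cutoff_deriv_block_lengths_le:
  assumes "n \<ge> 1"
  shows "\<bar>cutoff_deriv m (block_lengths M n j) x\<bar> \<le> 2 * 2 ^ m * (\<Prod>i<m. 1 / block_lengths M n j i)"
  using abs_cutoff_deriv_le[OF pos_summable_block_lengths[OF assms, of j], of m x]
  by (simp add: prod_dividef)

lemma cutoff_deriv_block_lengths_eq_0:
  assumes "n \<ge> 1" "j \<ge> 1" "\<bar>x\<bar> > 3 * real j * block_scale M n j"
  shows "cutoff_deriv m (block_lengths M n j) x = 0"
proof (rule cutoff_deriv_outside[OF pos_summable_block_lengths[OF assms(1)]])
  show "\<bar>x\<bar> > 3 / 2 * suminf (block_lengths M n j)"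
    using suminf_block_lengths_le[OF assms(1,2)] assms(3) by linarith
qed

lemma block_term_bound_0:
  assumes "n \<ge> 1" "m \<le> k"
  shows "\<bar>monomial_deriv 0 (k - m) x\<bar> * \<bar>cutoff_deriv m (block_lengths M n 0) x\<bar>
    \<le> 2 * 2 ^ k * M (n*(k+1)) powr (1/n)"
proof -
  define P where "P = (\<Prod>t\<in>{0..<m}. mu M (n * (t + 1)))"
  have "P ^ n \<le> M (n + n * (m - 0)) / M n"
    unfolding P_def by (rule prod_mu_power_le_ratio) auto
  also have "\<dots> \<le> M (n + n * m)"
    using M_ge_1[of n] M_pos[of "n + n*m"] by (simp add: divide_le_eq mult_le_cancel_left1 less_imp_le)
  also have "\<dots> \<le> M (n*(k+1))" using assms(2) by (intro M_mono) simp
  also have "\<dots> = (M (n*(k+1)) powr (1/n)) ^ n"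
    using powr_inverse_power[of "M (n*(k+1))" n] M_pos assms(1) by simp
  finally have P: "P \<le> M (n*(k+1)) powr (1/n)"
    by (rule power_le_imp_le_base_ge_1[OF assms(1)]) simp
  have "\<bar>monomial_deriv 0 (k - m) x\<bar> * \<bar>cutoff_deriv m (block_lengths M n 0) x\<bar>
      \<le> 1 * (2 * 2 ^ m * P)"
    using abs_cutoff_deriv_block_lengths_le[OF assms(1), of m 0 x]
    by (intro mult_mono) (auto simp: P_def prod_inverse_block_lengths_0 monomial_deriv_def)
  also have "\<dots> \<le> 2 * 2 ^ k * M (n*(k+1)) powr (1/n)"
    using P assms(2) P_def mu_pos by (simp add: mult_mono power_increasing prod_nonneg less_imp_le)
  finally show ?thesis .
qed

end

section \<open>Consequences of the relation \<open>\<prec>\<^sub>S\<^sub>V\<close>\<close>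

text \<open>\<open>SV_bound\<close> is \<open>SV_rel N M\<close> with the maximum over \<open>i\<close> unfolded and the \<open>(j - i)\<close>-th root
  raised to the power \<open>j - i\<close>.\<close>
locale SV_estimate = nonquasianalytic_weight M for M :: "nat \<Rightarrow> real" +
  fixes N :: "nat \<Rightarrow> real" and s C :: real
  assumes N_pos: "\<And>k. N k > 0" and s_ge_1: "s \<ge> 1" and C_pos: "C > 0"
    and SV_bound: "\<And>j i. j \<ge> 1 \<Longrightarrow> i < j \<Longrightarrow>
      N j * mu_tail M j ^ (j - i) \<le> s ^ j * M i * (C * real j) ^ (j - i)"

lemma SV_rel_imp_SV_estimate:
  assumes "SV_rel N M" "weight_seq M" "nonquasianalytic M" "\<And>k. N k > 0"
  shows "\<exists>s C. SV_estimate M N s C"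
proof -
  obtain s :: nat and C where s1: "s \<ge> 1" and H: "\<And>j. j \<ge> 1 \<Longrightarrow>
      (1 / real j) * (MAX i\<in>{0..<j}. (N j / (real s ^ j * M i)) powr (1 / real (j - i)))
        * (\<Sum>k. 1 / mu M (k + j)) \<le> C"
    using assms(1) unfolding SV_rel_def by blast
  have bound: "N j * mu_tail M j ^ (j - i) \<le> real s ^ j * M i * (C * real j) ^ (j - i) \<and> C > 0"
    if j: "j \<ge> 1" and ij: "i < j" for j i
  proof -
    define a where "a = N j / (real s ^ j * M i)"
    define X where "X = a powr (1 / real (j - i))"
    define T where "T = mu_tail M j"
    have a0: "a > 0" unfolding a_def using assms(4)[of j] weight_seq_pos[OF assms(2), of i] s1 by simp
    have X0: "X > 0" unfolding X_def using a0 by simp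
    have T0: "T > 0" unfolding T_def by (rule mu_tail_pos[OF assms(2,3)])
    have "X \<le> (MAX i\<in>{0..<j}. (N j / (real s ^ j * M i)) powr (1 / real (j - i)))"
      unfolding X_def a_def by (rule Max_ge) (use ij in auto)
    then have "(1 / real j) * X * T
        \<le> (1 / real j) * (MAX i\<in>{0..<j}. (N j / (real s ^ j * M i)) powr (1 / real (j - i))) * T"
      using T0 by (intro mult_right_mono mult_left_mono) auto
    then have XT: "X * T \<le> C * real j"
      using H[OF j] j unfolding T_def mu_tail_def by (simp add: field_simps)
    have "0 < C * real j" using XT X0 T0 by (smt (verit) mult_pos_pos)
    then have Cp: "C > 0" using j by (simp add: zero_less_mult_iff)
    have "X \<le> C * real j / T" using XT T0 by (simp add: le_divide_eq)
    then have "X ^ (j - i) \<le> (C * real j / T) ^ (j - i)" using X0 by (intro power_mono) auto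
    moreover have "X ^ (j - i) = a" unfolding X_def by (rule powr_inverse_power[OF a0]) (use ij in simp)
    ultimately have "a * T ^ (j - i) \<le> (C * real j) ^ (j - i)" using T0 by (simp add: power_divide le_divide_eq)
    then have "N j * T ^ (j - i) \<le> (C * real j) ^ (j - i) * (real s ^ j * M i)"
      unfolding a_def using weight_seq_pos[OF assms(2), of i] s1 by (simp add: field_simps)
    then show ?thesis using Cp by (simp add: T_def mult_ac)
  qed
  have "SV_estimate M N (real s) C"
    using assms(2-4) s1 bound[of 1 0] bound
    by unfold_locales auto
  then show ?thesis by blast
qed

context SV_estimate
begin

lemma block_scale_power_le:
  assumes "n \<ge> 1" "i < j"
  shows "N (n*j) * block_scale M n j ^ (n*(j-i)) \<le> s ^ (n*j) * max 1 C ^ (n*j) * M (n*i)"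
proof -
  define p where "p = n * (j - i)"
  define L where "L = block_scale M n j"
  have nj0: "real (n * j) > 0" using assms by simp
  have T: "mu_tail M (n*j) = L * real (n * j)"
    unfolding L_def block_scale_def using nj0 by (simp del: of_nat_mult)
  have "N (n*j) * mu_tail M (n*j) ^ p \<le> s ^ (n*j) * M (n*i) * (C * real (n*j)) ^ p"
    using SV_bound[of "n*j" "n*i"] assms unfolding p_def by (simp add: diff_mult_distrib2)
  then have "N (n*j) * L ^ p * real (n*j) ^ p \<le> s ^ (n*j) * M (n*i) * C ^ p * real (n*j) ^ p"
    unfolding T by (simp add: power_mult_distrib mult_ac)
  then have "N (n*j) * L ^ p \<le> s ^ (n*j) * M (n*i) * C ^ p"
    using nj0 by (simp add: mult_le_cancel_right)
  also have "\<dots> \<le> s ^ (n*j) * M (n*i) * max 1 C ^ (n*j)"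
    using power_le_max_one_power[OF _ C_pos, of p "n*j"] M_pos[of "n*i"] s_ge_1
    by (intro mult_left_mono) (auto simp: p_def)
  finally show ?thesis unfolding p_def L_def by (simp add: mult_ac)
qed

text \<open>The relation is used only at \<open>(nj, n(j - 1))\<close>; the power of \<open>1/\<lambda>\<^sub>j\<close> is controlled
  by AM-GM.\<close>
lemma block_scale_power_le_AM_GM:
  assumes n: "n \<ge> 1" and j: "j \<ge> 1" and d: "d \<ge> 1"
  shows "N (n*j) * block_scale M n j ^ n * (1 / block_scale M n j) ^ (n*d)
    \<le> (s * exp 1 * max 1 C) ^ (n*j) * M (n*j + n*d - 1)"
proof -
  have "N (n*j) * block_scale M n j ^ n * (1 / block_scale M n j) ^ (n*d)
      \<le> (s ^ (n*j) * max 1 C ^ (n*j) * M (n*(j - 1)))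
        * (exp 1 ^ (n*j) * (M (n*j + n*d - 1) / M (n*j - 1)))"
  proof (rule mult_mono)
    show "N (n*j) * block_scale M n j ^ n \<le> s ^ (n*j) * max 1 C ^ (n*j) * M (n*(j - 1))"
      using block_scale_power_le[OF n, of "j - 1" j] j by simp
    show "(1 / block_scale M n j) ^ (n*d) \<le> exp 1 ^ (n*j) * (M (n*j + n*d - 1) / M (n*j - 1))"
      by (rule inverse_block_scale_power_le[OF n j d])
  qed (use M_pos[of "n*(j - 1)"] s_ge_1 block_scale_pos[OF n j] in auto)
  also have "\<dots> \<le> (s ^ (n*j) * max 1 C ^ (n*j) * M (n*j - 1))
      * (exp 1 ^ (n*j) * (M (n*j + n*d - 1) / M (n*j - 1)))"
    using M_mono[of "n*(j-1)" "n*j - 1"] M_pos s_ge_1 n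
    by (intro mult_right_mono mult_left_mono) (auto simp: diff_mult_distrib2 less_imp_le)
  also have "\<dots> = (s * exp 1 * max 1 C) ^ (n*j) * M (n*j + n*d - 1)"
    using M_pos[of "n*j - 1"] by (simp add: field_simps)
  finally show ?thesis .
qed

lemma block_scale_power_ratio_le:
  assumes n: "n \<ge> 1" and j: "j \<ge> 1" and q: "q \<le> j"
  shows "N (n*j) * block_scale M n j ^ (n*q) / block_scale M n j ^ (n*r)
    \<le> (s * exp 1 * max 1 C) ^ (n*j) * M (n*(j - q + r + 1))"
proof -
  define i where "i = j - q + r"
  define L where "L = block_scale M n j"
  define W where "W = s * exp 1 * max 1 C"
  have L0: "L > 0" unfolding L_def by (rule block_scale_pos[OF n j])
  have W: "W \<ge> 1" unfolding W_def using s_ge_1 by (intro mult_ge1_I) auto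
  show ?thesis
  proof (cases "r < q")
    case True
    then have ij: "i < j" and "n*q - n*r = n*(j-i)"
      using q by (simp_all add: i_def flip: diff_mult_distrib2)
    then have "L ^ (n*q) / L ^ (n*r) = L ^ (n*(j-i))"
      using power_diff[of L "n*r" "n*q"] L0 True by simp
    then have "N (n*j) * L ^ (n*q) / L ^ (n*r) = N (n*j) * L ^ (n*(j-i))"
      by (metis times_divide_eq_right)
    also have "\<dots> \<le> s ^ (n*j) * max 1 C ^ (n*j) * M (n*i)"
      unfolding L_def by (rule block_scale_power_le[OF n ij])
    also have "\<dots> \<le> W ^ (n*j) * M (n*(i+1))"
      unfolding W_def power_mult_distrib using s_ge_1 W M_pos[of "n*i"] M_mono[of "n*i" "n*(i+1)"]
      by (intro mult_mono) (auto simp: mult_le_cancel_left1)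
    finally show ?thesis unfolding i_def L_def W_def .
  next
    case False
    define d where "d = r - q + 1"
    have "r + 1 = q + d" "j + d = i + 1" using False q unfolding d_def i_def by arith+
    then have "n*r + n = n*q + n*d" and jd: "n*j + n*d = n*(i+1)"
      by (metis add_mult_distrib2 nat_mult_1_right, metis add_mult_distrib2)
    then have "L ^ (n*q) * L ^ (n*d) = L ^ (n*r) * L ^ n" by (simp flip: power_add)
    then have "L ^ (n*q) / L ^ (n*r) = L ^ n * (1 / L) ^ (n*d)"
      using L0 by (simp add: field_simps)
    then have "N (n*j) * L ^ (n*q) / L ^ (n*r) = N (n*j) * L ^ n * (1 / L) ^ (n*d)"
      by (metis mult.assoc times_divide_eq_right)
    also have "\<dots> \<le> W ^ (n*j) * M (n*j + n*d - 1)"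
      unfolding L_def W_def by (rule block_scale_power_le_AM_GM[OF n j]) (simp add: d_def)
    also have "\<dots> \<le> W ^ (n*j) * M (n*(i+1))"
      using W jd by (intro mult_left_mono M_mono) auto
    finally show ?thesis unfolding i_def L_def W_def .
  qed
qed

lemma block_coefficient_bound:
  assumes n: "n \<ge> 1" and j: "j \<ge> 1" and mk: "m \<le> k" "k \<le> j + m" "r \<le> m"
  shows "N (n*j) powr (1/n) * block_scale M n j ^ (j + m - k) / block_scale M n j ^ r
      * (\<Prod>t\<in>{r..<m}. mu M (n*(t+1)))
    \<le> (s * exp 1 * max 1 C) ^ j * M (n*(k+1)) powr (1/n)"
proof -
  define q where "q = j + m - k"
  define i where "i = k - m + r"
  define L where "L = block_scale M n j"
  define P where "P = (\<Prod>t\<in>{r..<m}. mu M (n*(t+1)))"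
  define W where "W = s * exp 1 * max 1 C"
  have L0: "L > 0" unfolding L_def by (rule block_scale_pos[OF n j])
  have P0: "P > 0" unfolding P_def using mu_pos by (intro prod_pos) auto
  have W1: "W \<ge> 1" unfolding W_def using s_ge_1 by (intro mult_ge1_I) auto
  have P: "P ^ n \<le> M (n*(k+1)) / M (n*(i+1))"
  proof -
    have "P ^ n \<le> M (n*(i+1) + n * (m - r)) / M (n*(i+1))"
      unfolding P_def by (rule prod_mu_power_le_ratio[OF mk(3)]) (simp add: i_def)
    moreover have "n*(i+1) + n * (m - r) = n*(k+1)"
      using mk by (simp add: i_def flip: add_mult_distrib2)
    ultimately show ?thesis by metis
  qed
  have X: "N (n*j) * L ^ (n*q) / L ^ (n*r) \<le> W ^ (n*j) * M (n*(i+1))"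
    using block_scale_power_ratio_le[OF n j, of q r] mk
    unfolding L_def W_def q_def i_def by (simp add: add.commute)
  have root: "(x powr (1/n)) ^ n = x" if "x > 0" for x
    using powr_inverse_power[OF that, of n] n by simp
  have "(N (n*j) powr (1/n) * L ^ q / L ^ r * P) ^ n = N (n*j) * L ^ (n*q) / L ^ (n*r) * P ^ n"
    using N_pos by (simp add: power_mult_distrib power_divide root mult.commute flip: power_mult)
  also have "\<dots> \<le> (W ^ (n*j) * M (n*(i+1))) * (M (n*(k+1)) / M (n*(i+1)))"
    using W1 M_pos[of "n*(i+1)"] P0 by (intro mult_mono[OF X P]) auto
  also have "\<dots> = (W ^ j * M (n*(k+1)) powr (1/n)) ^ n"
    using M_pos[of "n*(i+1)"] M_pos[of "n*(k+1)"]
    by (simp add: power_mult_distrib root mult.commute flip: power_mult)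
  finally have "N (n*j) powr (1/n) * L ^ q / L ^ r * P \<le> W ^ j * M (n*(k+1)) powr (1/n)"
    by (rule power_le_imp_le_base_ge_1[OF n]) (use W1 in simp)
  then show ?thesis unfolding L_def q_def P_def W_def .
qed

definition block_growth :: real where
  "block_growth = 3 * exp 1 * (s * exp 1 * max 1 C)"

lemma block_growth_ge_1: "block_growth \<ge> 1"
  unfolding block_growth_def using s_ge_1 by (intro mult_ge1_I) auto

text \<open>On the support of the cutoff, \<open>|x| \<le> 3j\<lambda>\<^sub>j\<close>, the monomial factor is at most \<open>(3e)\<^sup>j \<lambda>\<^sub>j\<^sup>q\<close>.\<close>
lemma block_term_bound:
  assumes n: "n \<ge> 1" and j: "j \<ge> 1" and mk: "m \<le> k"
  shows "N (n*j) powr (1/n) * (\<bar>monomial_deriv j (k - m) x\<bar> * \<bar>cutoff_deriv m (block_lengths M n j) x\<bar>)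
    \<le> 2 * 2 ^ k * block_growth ^ j * M (n*(k+1)) powr (1/n)"
proof -
  define l where "l = block_lengths M n j"
  define L where "L = block_scale M n j"
  define b where "b = N (n*j) powr (1/n)"
  define Mn where "Mn = M (n*(k+1)) powr (1/n)"
  have L0: "L > 0" unfolding L_def by (rule block_scale_pos[OF n j])
  have b0: "b > 0" unfolding b_def using N_pos[of "n*j"] by simp
  have RHS0: "0 \<le> 2 * 2 ^ k * block_growth ^ j * Mn" using block_growth_ge_1 by (simp add: Mn_def)
  show ?thesis
  proof (cases "\<bar>x\<bar> > 3 * real j * L \<or> k - m > j")
    case True
    then have zero: "\<bar>monomial_deriv j (k - m) x\<bar> * \<bar>cutoff_deriv m l x\<bar> = 0"
      using cutoff_deriv_block_lengths_eq_0[OF n j, of x m] by (auto simp: monomial_deriv_def l_def L_def)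
    show ?thesis unfolding l_def[symmetric] zero using RHS0 by (simp add: Mn_def)
  next
    case False
    then have kmj: "k - m \<le> j" and xR: "\<bar>x\<bar> \<le> 3 * real j * L" by auto
    define q where "q = j - (k - m)"
    have monomial: "\<bar>monomial_deriv j (k - m) x\<bar> \<le> (3 * exp 1) ^ j * L ^ q"
      unfolding q_def using abs_monomial_deriv_le_exp[OF xR _ kmj] L0 by simp
    obtain r where r: "r \<le> m" "(\<Prod>i<m. 1 / l i) \<le> (1 / L) ^ r * (\<Prod>t\<in>{r..<m}. mu M (n * (t + 1)))"
      using prod_inverse_block_lengths_le[OF n j, of m] unfolding l_def L_def by blast
    define P where "P = (\<Prod>t\<in>{r..<m}. mu M (n * (t + 1)))"
    have "\<bar>cutoff_deriv m l x\<bar> \<le> 2 * 2 ^ m * (\<Prod>i<m. 1 / l i)"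
      unfolding l_def by (rule abs_cutoff_deriv_block_lengths_le[OF n])
    also have "\<dots> \<le> 2 * 2 ^ m * ((1 / L) ^ r * P)"
      unfolding P_def by (rule mult_left_mono[OF r(2)]) simp
    finally have cutoff: "\<bar>cutoff_deriv m l x\<bar> \<le> 2 * 2 ^ m * ((1 / L) ^ r * P)" .
    have "q = j + m - k" "k \<le> j + m" using kmj mk by (simp_all add: q_def)
    then have key: "b * L ^ q / L ^ r * P \<le> (s * exp 1 * max 1 C) ^ j * Mn"
      unfolding b_def L_def P_def Mn_def using block_coefficient_bound[OF n j mk(1) _ r(1)] by simp
    have "b * (\<bar>monomial_deriv j (k - m) x\<bar> * \<bar>cutoff_deriv m l x\<bar>)
        \<le> b * ((3 * exp 1) ^ j * L ^ q * (2 * 2 ^ m * ((1 / L) ^ r * P)))"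
      using monomial cutoff b0 by (intro mult_left_mono mult_mono) auto
    also have "\<dots> = 2 * 2 ^ m * (3 * exp 1) ^ j * (b * L ^ q / L ^ r * P)"
      by (simp add: field_simps)
    also have "\<dots> \<le> 2 * 2 ^ m * (3 * exp 1) ^ j * ((s * exp 1 * max 1 C) ^ j * Mn)"
      using key by (intro mult_left_mono) auto
    also have "\<dots> = 2 * 2 ^ m * block_growth ^ j * Mn"
      by (simp add: block_growth_def power_mult_distrib mult_ac)
    also have "\<dots> \<le> 2 * 2 ^ k * block_growth ^ j * Mn"
      using mk block_growth_ge_1
      by (intro mult_right_mono mult_left_mono power_increasing) (auto simp: Mn_def)
    finally show ?thesis unfolding b_def l_def Mn_def .
  qed
qed

lemma abs_block_le:
  assumes n: "n \<ge> 1"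
  shows "N (n*j) powr (1/n) * \<bar>block M n j k x\<bar>
    \<le> 2 * max 1 (N 0 powr (1/n)) * 4 ^ k * block_growth ^ j * M (n*(k+1)) powr (1/n)"
proof -
  define b where "b = N (n*j) powr (1/n)"
  define Mn where "Mn = M (n*(k+1)) powr (1/n)"
  define K where "K = max 1 (N 0 powr (1/n))"
  define T where "T = K * (2 * 2 ^ k * block_growth ^ j * Mn)"
  have b0: "b > 0" unfolding b_def using N_pos[of "n*j"] by simp
  have T0: "0 \<le> 2 * 2 ^ k * block_growth ^ j * Mn" using block_growth_ge_1 by (simp add: Mn_def)
  have K1: "K \<ge> 1" unfolding K_def by simp
  have term_bound: "b * (\<bar>monomial_deriv j (k - m) x\<bar> * \<bar>cutoff_deriv m (block_lengths M n j) x\<bar>) \<le> T"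
    if mk: "m \<le> k" for m
  proof (cases "j = 0")
    case True
    have "b * (\<bar>monomial_deriv j (k - m) x\<bar> * \<bar>cutoff_deriv m (block_lengths M n j) x\<bar>)
        \<le> K * (2 * 2 ^ k * Mn)"
    proof (rule mult_mono)
      show "b \<le> K" unfolding b_def K_def True by simp
    qed (use block_term_bound_0[OF n mk, of x] K1 in \<open>auto simp: True Mn_def\<close>)
    then show ?thesis unfolding T_def True by simp
  next
    case False
    then have "b * (\<bar>monomial_deriv j (k - m) x\<bar> * \<bar>cutoff_deriv m (block_lengths M n j) x\<bar>)
        \<le> 2 * 2 ^ k * block_growth ^ j * Mn"
      unfolding b_def Mn_def by (intro block_term_bound[OF n _ mk]) simp
    also have "\<dots> \<le> T" unfolding T_def using mult_right_mono[OF K1 T0] by simp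
    finally show ?thesis .
  qed
  have "b * \<bar>block M n j k x\<bar>
      \<le> b * (\<Sum>m\<le>k. real (k choose m) * (\<bar>monomial_deriv j (k - m) x\<bar> * \<bar>cutoff_deriv m (block_lengths M n j) x\<bar>))"
    unfolding block_def using b0
    by (intro mult_left_mono order_trans[OF sum_abs]) (auto simp: abs_mult mult.assoc)
  also have "\<dots> = (\<Sum>m\<le>k. real (k choose m)
      * (b * (\<bar>monomial_deriv j (k - m) x\<bar> * \<bar>cutoff_deriv m (block_lengths M n j) x\<bar>)))"
    by (simp add: sum_distrib_left mult_ac)
  also have "\<dots> \<le> (\<Sum>m\<le>k. real (k choose m) * T)"
    by (rule sum_mono) (use term_bound in \<open>auto intro: mult_left_mono\<close>)
  also have "\<dots> = 2 ^ k * T"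
    by (simp add: sum_distrib_right[symmetric] choose_row_sum[of k, THEN arg_cong[where f=real], simplified])
  also have "\<dots> = 2 * K * 4 ^ k * block_growth ^ j * Mn"
    unfolding T_def by (simp add: mult_ac flip: power_mult_distrib)
  finally show ?thesis unfolding b_def K_def Mn_def .
qed

section \<open>Extension of jets\<close>

lemma block_series:
  assumes n: "n \<ge> 1" and K: "K \<ge> 0"
    and c: "\<And>j. \<bar>c j\<bar> \<le> K * (1 / (2 * block_growth)) ^ j * N (n*j) powr (1/n)"
  shows "((\<lambda>y. \<Sum>j. c j * block M n j k y) has_real_derivative (\<Sum>j. c j * block M n j (Suc k) y)) (at y)"
    and "(\<Sum>j. c j * block M n j k 0) = c k"
    and "\<bar>\<Sum>j. c j * block M n j k y\<bar> \<le> 4 * K * max 1 (N 0 powr (1/n)) * 4 ^ k * M (n*(k+1)) powr (1/n)"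
proof -
  define A where "A = 2 * K * max 1 (N 0 powr (1/n))"
  define Mn where "Mn k = M (n*(k+1)) powr (1/n)" for k
  have dominated: "\<bar>c j * block M n j k y\<bar> \<le> A * 4 ^ k * Mn k * (1/2) ^ j" for j k y
  proof -
    have "\<bar>c j * block M n j k y\<bar>
        \<le> K * (1 / (2 * block_growth)) ^ j * N (n*j) powr (1/n) * \<bar>block M n j k y\<bar>"
      unfolding abs_mult by (rule mult_right_mono[OF c]) simp
    also have "\<dots> = K * (1 / (2 * block_growth)) ^ j * (N (n*j) powr (1/n) * \<bar>block M n j k y\<bar>)"
      by (simp add: mult.assoc)
    also have "\<dots> \<le> K * (1 / (2 * block_growth)) ^ j
        * (2 * max 1 (N 0 powr (1/n)) * 4 ^ k * block_growth ^ j * Mn k)"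
      unfolding Mn_def using abs_block_le[OF n, of j k y] K block_growth_ge_1 by (intro mult_left_mono) auto
    also have "\<dots> = A * 4 ^ k * Mn k * (1/2) ^ j"
      unfolding A_def using block_growth_ge_1 by (simp add: power_mult_distrib power_divide)
    finally show ?thesis .
  qed
  have summable: "summable (\<lambda>j. A * 4 ^ k * Mn k * (1/2::real) ^ j)" for k
    by (intro summable_mult summable_geometric) simp
  show "((\<lambda>y. \<Sum>j. c j * block M n j k y) has_real_derivative (\<Sum>j. c j * block M n j (Suc k) y)) (at y)"
    by (rule has_real_derivative_suminf_dominated[OF _ dominated summable])
      (intro DERIV_cmult has_real_derivative_block[OF n])
  have "(\<lambda>j. c j * block M n j k 0) = (\<lambda>j. if j = k then c k else 0)"
    by (auto simp: block_at_0[OF n] fun_eq_iff)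
  then show "(\<Sum>j. c j * block M n j k 0) = c k"
    by (simp add: sums_single[THEN sums_unique, symmetric])
  have "\<bar>\<Sum>j. c j * block M n j k y\<bar> \<le> (\<Sum>j. A * 4 ^ k * Mn k * (1/2::real) ^ j)"
    using norm_suminf_le[of "\<lambda>j. c j * block M n j k y", OF _ summable] dominated by simp
  also have "\<dots> = 2 * A * 4 ^ k * Mn k"
    using suminf_mult[of "\<lambda>j. (1/2::real) ^ j" "A * 4 ^ k * Mn k"] suminf_geometric[of "1/2::real"]
    by simp
  finally show "\<bar>\<Sum>j. c j * block M n j k y\<bar> \<le> 4 * K * max 1 (N 0 powr (1/n)) * 4 ^ k * M (n*(k+1)) powr (1/n)"
    unfolding A_def Mn_def by simp
qed

text \<open>The rescaling \<open>x \<mapsto> \<tau> x\<close> turns the geometric factor \<open>\<sigma>\<^sup>j\<close> into \<open>(2 block_growth)\<^sup>-\<^sup>j\<close>.\<close>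
lemma real_jet_extension:
  assumes n: "n \<ge> 1" and \<sigma>: "\<sigma> > 0" and K: "K \<ge> 0"
    and c: "\<And>j. \<bar>c j\<bar> \<le> K * \<sigma> ^ j * N (n*j) powr (1/n)"
  shows "\<exists>F. (\<forall>k x. (F k has_real_derivative F (Suc k) x) (at x)) \<and> (\<forall>k. F k 0 = c k)
    \<and> (\<forall>k x. \<bar>F k x\<bar> \<le> 4 * K * max 1 (N 0 powr (1/n)) * (8 * \<sigma> * block_growth) ^ k
                           * M (n*(k+1)) powr (1/n))"
proof -
  define \<tau> where "\<tau> = 2 * \<sigma> * block_growth"
  define G where "G k y = (\<Sum>j. c j / \<tau> ^ j * block M n j k y)" for k y
  define F where "F k x = \<tau> ^ k * G k (\<tau> * x)" for k x
  have \<tau>: "\<tau> > 0" unfolding \<tau>_def using \<sigma> block_growth_ge_1 by simp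
  have "\<bar>c j / \<tau> ^ j\<bar> \<le> K * (1 / (2 * block_growth)) ^ j * N (n*j) powr (1/n)" for j
  proof -
    have "\<bar>c j / \<tau> ^ j\<bar> \<le> K * \<sigma> ^ j * N (n*j) powr (1/n) / \<tau> ^ j"
      using c[of j] \<tau> by (simp add: abs_div divide_right_mono)
    also have "\<dots> = K * (1 / (2 * block_growth)) ^ j * N (n*j) powr (1/n)"
      unfolding \<tau>_def using \<sigma> by (simp add: power_mult_distrib power_divide)
    finally show ?thesis .
  qed
  note G = block_series[OF n K this, folded G_def]
  have "(F k has_real_derivative F (Suc k) x) (at x)" for k x
  proof -
    have "((\<lambda>x. G k (\<tau> * x)) has_real_derivative G (Suc k) (\<tau> * x) * \<tau>) (at x)"
      by (rule DERIV_chain2[OF G(1) DERIV_cmult_Id])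
    from DERIV_cmult[OF this, of "\<tau> ^ k"]
    have "((\<lambda>x. \<tau> ^ k * G k (\<tau> * x)) has_real_derivative F (Suc k) x) (at x)"
      by (simp add: F_def algebra_simps)
    moreover have "F k = (\<lambda>x. \<tau> ^ k * G k (\<tau> * x))" by (simp add: F_def fun_eq_iff)
    ultimately show ?thesis by simp
  qed
  moreover have "F k 0 = c k" for k using G(2)[of k] \<tau> by (simp add: F_def)
  moreover have "\<bar>F k x\<bar> \<le> 4 * K * max 1 (N 0 powr (1/n)) * (8 * \<sigma> * block_growth) ^ k
      * M (n*(k+1)) powr (1/n)" for k x
  proof -
    have "\<bar>F k x\<bar> \<le> \<tau> ^ k * (4 * K * max 1 (N 0 powr (1/n)) * 4 ^ k * M (n*(k+1)) powr (1/n))"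
      unfolding F_def using G(3) \<tau> by (simp add: abs_mult mult_left_mono)
    also have "\<dots> = 4 * K * max 1 (N 0 powr (1/n)) * (\<tau> * 4) ^ k * M (n*(k+1)) powr (1/n)"
      by (simp add: power_mult_distrib mult_ac)
    also have "\<tau> * 4 = 8 * \<sigma> * block_growth" unfolding \<tau>_def by simp
    finally show ?thesis .
  qed
  ultimately show ?thesis by blast
qed

lemma complex_jet_extension:
  assumes n: "n \<ge> 1" and a: "a \<in> Lambda_seq (seq_pow_index N n)"
  shows "\<exists>F A B. A \<ge> 0 \<and> B > 0 \<and> derivs_of (F 0) F \<and> (\<forall>k. F k 0 = a k)
    \<and> (\<forall>k x. cmod (F k x) \<le> A * B ^ k * M (n*(k+1)) powr (1/n))"
proof -
  obtain \<sigma> K where \<sigma>: "\<sigma> > 0" and aK: "\<And>k. cmod (a k) \<le> K * \<sigma> ^ k * N (n*k) powr (1/n)"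
    using a unfolding Lambda_seq_def seq_pow_index_def by auto
  have "0 \<le> K * N 0 powr (1/n)" using order_trans[OF norm_ge_zero aK[of 0]] by simp
  then have K: "K \<ge> 0" using N_pos[of 0] by (simp add: zero_le_mult_iff)
  define A where "A = 4 * K * max 1 (N 0 powr (1/n))"
  define B where "B = 8 * \<sigma> * block_growth"
  have "\<bar>Re (a k)\<bar> \<le> K * \<sigma> ^ k * N (n*k) powr (1/n)" "\<bar>Im (a k)\<bar> \<le> K * \<sigma> ^ k * N (n*k) powr (1/n)"
    for k using order_trans[OF abs_Re_le_cmod aK] order_trans[OF abs_Im_le_cmod aK] by auto
  from real_jet_extension[OF n \<sigma> K this(1)] real_jet_extension[OF n \<sigma> K this(2)]
  obtain Fr Fi where
    Fr: "\<And>k x. (Fr k has_real_derivative Fr (Suc k) x) (at x)" "\<And>k. Fr k 0 = Re (a k)"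
      "\<And>k x. \<bar>Fr k x\<bar> \<le> A * B ^ k * M (n*(k+1)) powr (1/n)" and
    Fi: "\<And>k x. (Fi k has_real_derivative Fi (Suc k) x) (at x)" "\<And>k. Fi k 0 = Im (a k)"
      "\<And>k x. \<bar>Fi k x\<bar> \<le> A * B ^ k * M (n*(k+1)) powr (1/n)"
    unfolding A_def B_def by blast
  define F where "F k x = complex_of_real (Fr k x) + \<i> * complex_of_real (Fi k x)" for k x
  have "derivs_of (F 0) F"
    unfolding derivs_of_def F_def
    by (auto intro!: has_vector_derivative_add has_vector_derivative_mult_right
        has_vector_derivative_of_real Fr(1) Fi(1))
  moreover have "F k 0 = a k" for k unfolding F_def Fr(2) Fi(2) by (simp add: complex_eq[symmetric])
  moreover have "cmod (F k x) \<le> (2 * A) * B ^ k * M (n*(k+1)) powr (1/n)" for k x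
  proof -
    have "cmod (F k x) \<le> \<bar>Fr k x\<bar> + \<bar>Fi k x\<bar>"
      unfolding F_def using norm_triangle_ineq[of "complex_of_real (Fr k x)" "\<i> * complex_of_real (Fi k x)"]
      by (simp add: norm_mult)
    then show ?thesis using Fr(3)[of k x] Fi(3)[of k x] by simp
  qed
  moreover have "2 * A \<ge> 0" "B > 0" unfolding A_def B_def using K \<sigma> block_growth_ge_1 by simp_all
  ultimately show ?thesis by blast
qed

end

lemma weight_matrix_pos: "weight_matrix Mat \<Longrightarrow> \<alpha> > 0 \<Longrightarrow> Mat \<alpha> k > 0"
  by (simp add: weight_matrix_def weight_seq_pos)

lemma R_moderate_growth_power:
  assumes wm: "weight_matrix Mat" and rm: "R_moderate_growth Mat"
  shows "\<alpha> > 0 \<Longrightarrow> \<exists>\<gamma>>0. \<exists>D\<ge>1. \<forall>k. Mat \<alpha> (Suc n * k) \<le> D ^ (Suc n * k) * Mat \<gamma> k ^ Suc n"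
proof (induction n arbitrary: \<alpha>)
  case 0
  have "\<forall>k. Mat \<alpha> (Suc 0 * k) \<le> 1 ^ (Suc 0 * k) * Mat \<alpha> k ^ Suc 0" by simp
  then show ?case using 0 by blast
next
  case (Suc n)
  obtain \<beta> C where \<beta>: "\<beta> > 0" "C \<ge> 1" and split: "\<And>j k. Mat \<alpha> (j + k) \<le> C ^ (j + k) * Mat \<beta> j * Mat \<beta> k"
    using rm Suc.prems unfolding R_moderate_growth_def by blast
  obtain \<gamma> D where \<gamma>: "\<gamma> > 0" "D \<ge> 1" and IH: "\<And>k. Mat \<beta> (Suc n * k) \<le> D ^ (Suc n * k) * Mat \<gamma> k ^ Suc n"
    using Suc.IH[OF \<beta>(1)] by blast
  define \<gamma>' where "\<gamma>' = max \<beta> \<gamma>"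
  have pos: "\<And>a k. a > 0 \<Longrightarrow> Mat a k > 0" using weight_matrix_pos[OF wm] by blast
  have "Mat \<alpha> (Suc (Suc n) * k) \<le> (C * D) ^ (Suc (Suc n) * k) * Mat \<gamma>' k ^ Suc (Suc n)" for k
  proof -
    have mono: "Mat \<beta> k \<le> Mat \<gamma>' k" "Mat \<gamma> k \<le> Mat \<gamma>' k"
      unfolding \<gamma>'_def using wm \<beta>(1) \<gamma>(1) by (auto simp: weight_matrix_def)
    have "Mat \<alpha> (Suc (Suc n) * k) = Mat \<alpha> (Suc n * k + k)" by (simp add: algebra_simps)
    also have "\<dots> \<le> C ^ (Suc n * k + k) * Mat \<beta> (Suc n * k) * Mat \<beta> k" by (rule split)
    also have "\<dots> \<le> C ^ (Suc n * k + k) * (D ^ (Suc n * k) * Mat \<gamma> k ^ Suc n) * Mat \<gamma>' k"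
      using IH[of k] mono(1) \<beta> pos[OF \<beta>(1), of k] pos[OF \<beta>(1), of "Suc n * k"]
      by (intro mult_mono mult_left_mono) (auto intro: less_imp_le)
    also have "\<dots> \<le> C ^ (Suc n * k + k) * (D ^ (Suc (Suc n) * k) * Mat \<gamma>' k ^ Suc n) * Mat \<gamma>' k"
      using \<beta> \<gamma> mono(2) pos[OF \<gamma>(1), of k] pos[OF \<beta>(1), of k] mono(1)
      by (intro mult_right_mono mult_left_mono mult_mono power_increasing power_mono) auto
    also have "\<dots> = (C * D) ^ (Suc (Suc n) * k) * Mat \<gamma>' k ^ Suc (Suc n)"
      by (simp add: algebra_simps)
    finally show ?thesis .
  qed
  moreover have "\<gamma>' > 0" "C * D \<ge> 1" unfolding \<gamma>'_def using \<beta> \<gamma> by (auto intro: mult_ge1_I)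
  ultimately show ?case by blast
qed

lemma R_moderate_growth_pow_index_bound:
  assumes wm: "weight_matrix Mat" and rm: "R_moderate_growth Mat" and \<beta>: "\<beta> > 0" and n: "n \<ge> 1"
  shows "\<exists>\<gamma>>0. \<exists>A>0. \<exists>B>0. \<forall>k. Mat \<beta> (n*(k+1)) powr (1/n) \<le> A * B ^ k * Mat \<gamma> k"
proof -
  obtain n' where n': "n = Suc n'" using n by (cases n) auto
  have pos: "\<And>a k. a > 0 \<Longrightarrow> Mat a k > 0" using weight_matrix_pos[OF wm] by blast
  obtain \<gamma> D where \<gamma>: "\<gamma> > 0" "D \<ge> 1" and power: "\<And>k. Mat \<beta> (n * k) \<le> D ^ (n * k) * Mat \<gamma> k ^ n"
    using R_moderate_growth_power[OF wm rm \<beta>, of n'] unfolding n' by blast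
  obtain \<gamma>' C where \<gamma>': "\<gamma>' > 0" "C \<ge> 1" and split: "\<And>j k. Mat \<gamma> (j + k) \<le> C ^ (j + k) * Mat \<gamma>' j * Mat \<gamma>' k"
    using rm \<gamma>(1) unfolding R_moderate_growth_def by blast
  have "Mat \<beta> (n*(k+1)) powr (1/n) \<le> (D * C * Mat \<gamma>' 1) * (D * C) ^ k * Mat \<gamma>' k" for k
  proof -
    have "(Mat \<beta> (n*(k+1)) powr (1/n)) ^ n = Mat \<beta> (n*(k+1))"
      by (rule powr_inverse_power) (use pos[OF \<beta>] n in auto)
    also have "\<dots> \<le> D ^ (n * (k+1)) * Mat \<gamma> (k+1) ^ n" by (rule power)
    also have "\<dots> = (D ^ (k+1) * Mat \<gamma> (k+1)) ^ n"
      by (simp only: power_mult_distrib power_mult[symmetric] mult.commute)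
    finally have "Mat \<beta> (n*(k+1)) powr (1/n) \<le> D ^ (k+1) * Mat \<gamma> (k+1)"
      by (rule power_le_imp_le_base_ge_1[OF n]) (use \<gamma> pos[OF \<gamma>(1)] in \<open>simp add: less_imp_le\<close>)
    also have "\<dots> \<le> D ^ (k+1) * (C ^ (k+1) * Mat \<gamma>' k * Mat \<gamma>' 1)"
      using split[of k 1] \<gamma> by (intro mult_left_mono) auto
    also have "\<dots> = (D * C * Mat \<gamma>' 1) * (D * C) ^ k * Mat \<gamma>' k" by (simp add: power_mult_distrib mult_ac)
    finally show ?thesis .
  qed
  moreover have "D * C * Mat \<gamma>' 1 > 0" "D * C > 0" using \<gamma> \<gamma>' pos[OF \<gamma>'(1)] by simp_all
  ultimately show ?thesis using \<gamma>'(1) by blast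
qed

lemma Lambda_seq_mono:
  assumes "seq_preceq A B" "\<And>k. A k > 0" "\<And>k. B k > 0"
  shows "Lambda_seq A \<subseteq> Lambda_seq B"
proof
  fix a
  assume "a \<in> Lambda_seq A"
  then obtain \<sigma> K where \<sigma>: "\<sigma> > 0" and aK: "\<And>k. cmod (a k) \<le> K * \<sigma> ^ k * A k"
    unfolding Lambda_seq_def by blast
  obtain c where c: "\<And>k. k \<ge> 1 \<Longrightarrow> (A k / B k) powr (1 / real k) \<le> c"
    using assms(1) unfolding seq_preceq_def by blast
  have K: "K \<ge> 0" using order_trans[OF norm_ge_zero aK[of 0]] assms(2)[of 0] by (simp add: zero_le_mult_iff)
  have AB: "A k \<le> max 1 c ^ k * (max 1 (A 0 / B 0) * B k)" for k
  proof (cases "k = 0")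
    case True
    have "A 0 = B 0 * (A 0 / B 0)" using assms(3)[of 0] by simp
    also have "\<dots> \<le> B 0 * max 1 (A 0 / B 0)" using assms(3)[of 0] by (intro mult_left_mono) auto
    finally show ?thesis using True by (simp add: mult.commute)
  next
    case False
    have "A k / B k = ((A k / B k) powr (1 / real k)) ^ k"
      using powr_inverse_power[of "A k / B k" k] assms(2,3)[of k] False by simp
    also have "\<dots> \<le> max 1 c ^ k" using c[of k] False assms(2,3)[of k] by (intro power_mono) auto
    finally have "A k \<le> max 1 c ^ k * B k" using assms(3)[of k] by (simp add: divide_le_eq)
    also have "\<dots> \<le> max 1 c ^ k * (max 1 (A 0 / B 0) * B k)"
      using assms(3)[of k] by (intro mult_left_mono) (auto intro: mult_le_cancel_right1[THEN iffD2])
    finally show ?thesis .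
  qed
  have "cmod (a k) \<le> (K * max 1 (A 0 / B 0)) * (\<sigma> * max 1 c) ^ k * B k" for k
    using order_trans[OF aK mult_left_mono[OF AB]] K \<sigma> by (simp add: power_mult_distrib mult_ac)
  moreover have "\<sigma> * max 1 c > 0" using \<sigma> by simp
  ultimately show "a \<in> Lambda_seq B" unfolding Lambda_seq_def by blast
qed

lemma Lambda_seq_pow_index_subset_jet_image:
  assumes wm: "weight_matrix Mat" and rm: "R_moderate_growth Mat" and \<beta>: "\<beta> > 0" and n: "n \<ge> 1"
    and SV: "SV_estimate (Mat \<beta>) N s C"
  shows "Lambda_seq (seq_pow_index N n) \<subseteq> jet_image (E_roumieu Mat)"
proof
  fix a
  assume "a \<in> Lambda_seq (seq_pow_index N n)"
  then obtain F A B where A: "A \<ge> 0" and B: "B > 0" and F: "derivs_of (F 0) F" "\<And>k. F k 0 = a k"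
    and F_bound: "\<And>k x. cmod (F k x) \<le> A * B ^ k * Mat \<beta> (n*(k+1)) powr (1/n)"
    using SV_estimate.complex_jet_extension[OF SV n] by metis
  obtain \<gamma> A' B' where \<gamma>: "\<gamma> > 0" "B' > 0"
    and growth: "\<And>k. Mat \<beta> (n*(k+1)) powr (1/n) \<le> A' * B' ^ k * Mat \<gamma> k"
    using R_moderate_growth_pow_index_bound[OF wm rm \<beta> n] by blast
  have "cmod (F k x) \<le> (A * A') * (B * B') ^ k * Mat \<gamma> k" for k x
    using order_trans[OF F_bound mult_left_mono[OF growth]] A B by (simp add: power_mult_distrib mult_ac)
  then have "\<exists>\<sigma>>0. \<exists>\<alpha>>0. \<exists>C. \<forall>x\<in>{- real m..real m}. \<forall>k. cmod (F k x) \<le> C * \<sigma> ^ k * Mat \<alpha> k" for m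
    using \<gamma>(1) mult_pos_pos[OF B \<gamma>(2)] by blast
  then have "F 0 \<in> E_roumieu Mat" unfolding E_roumieu_def using F(1) by blast
  then show "a \<in> jet_image (E_roumieu Mat)" unfolding jet_image_def using F by blast
qed

theorem proposition5p3:
  fixes Mat Mat' :: "real \<Rightarrow> nat \<Rightarrow> real"
  assumes "weight_matrix Mat"
    and "nonquasianalytic_matrix Mat"
    and "R_moderate_growth Mat"
    and "\<And>\<alpha> k. \<alpha> > 0 \<Longrightarrow> Mat' \<alpha> k > 0"
    and "\<And>\<alpha>. \<alpha> > 0 \<Longrightarrow>
           liminf (\<lambda>k. ereal ((Mat' \<alpha> k / fact k) powr (1 / real k))) > 0"
    and "\<exists>\<alpha>0>0. (\<forall>\<alpha>>0. \<exists>n::nat. n \<ge> 1 \<and> seq_preceq (Mat' \<alpha>) (seq_pow_index (Mat' \<alpha>0) n))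
                 \<and> (\<exists>\<beta>0>0. SV_rel (Mat' \<alpha>0) (Mat \<beta>0))"
  shows "Lambda_family Mat' \<subseteq> jet_image (E_roumieu Mat)"
proof
  fix a
  assume "a \<in> Lambda_family Mat'"
  then obtain \<alpha> where \<alpha>: "\<alpha> > 0" "a \<in> Lambda_seq (Mat' \<alpha>)" unfolding Lambda_family_def by blast
  obtain \<alpha>0 \<beta>0 n where \<alpha>0: "\<alpha>0 > 0" and \<beta>0: "\<beta>0 > 0" and SV: "SV_rel (Mat' \<alpha>0) (Mat \<beta>0)"
    and n: "n \<ge> 1" and preceq: "seq_preceq (Mat' \<alpha>) (seq_pow_index (Mat' \<alpha>0) n)"
    using assms(6) \<alpha>(1) by blast
  have "seq_pow_index (Mat' \<alpha>0) n k > 0" for k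
    using assms(4)[OF \<alpha>0, of "n*k"] by (simp add: seq_pow_index_def)
  then have "a \<in> Lambda_seq (seq_pow_index (Mat' \<alpha>0) n)"
    using Lambda_seq_mono[OF preceq assms(4)[OF \<alpha>(1)]] \<alpha>(2) by blast
  moreover obtain s C where "SV_estimate (Mat \<beta>0) (Mat' \<alpha>0) s C"
    using SV_rel_imp_SV_estimate[OF SV] assms(1,2,4) \<alpha>0 \<beta>0
    by (auto simp: weight_matrix_def nonquasianalytic_matrix_def)
  ultimately show "a \<in> jet_image (E_roumieu Mat)"
    using Lambda_seq_pow_index_subset_jet_image[OF assms(1,3) \<beta>0 n] by blast
qed

end
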